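(* If an atomic flow $A$ is cycle-free and $A\to_{\mathsf c}^\star B$, then $B$ is cycle-free.
   Context: An atomic flow is a tuple $(V,E,\eta,up,lo)$: finite sets of vertices and edges, a labelling of vertices by interaction, cut, weakening, coweakening, contraction or cocontraction, and maps $up:E\to V\cup\{\top\}$, $lo:E\to V\cup\{\bot\}$. Upper edges of $\nu$: $lo(\epsilon)=\nu$; lower edges: $up(\epsilon)=\nu$. (Upper, lower) edge numbers: $(0,2)$ interaction, $(2,0)$ cut, $(0,1)$ weakening, $(1,0)$ coweakening, $(2,1)$ contraction, $(1,2)$ cocontraction; no directed cycles; there is $\pi:E\to\{+,-\}$ giving all edges of a (co)contraction the same sign and the two edges of an interaction/cut different signs. A path from $\nu$ to $\nu'$ is a sequence of edges $\epsilon_1,\dots,\epsilon_h$ with $lo(\epsilon_i)=up(\epsilon_{i+1})$, $up(\epsilon_1)=\nu$, $lo(\epsilon_h)=\nu'$; its reversal is a path from $\nu'$ to $\nu$. An $\mathsf{ai}$-path from $\nu$ to $\nu'$ is either a path from $\nu$ to $\nu'$ or a sequence $\epsilon_1,\dots,\epsilon_k,\epsilon_{k+1},\dots,\epsilon_h$ with $\epsilon_k\neq\epsilon_{k+1}$ such that, for some interaction or cut vertex $\nu''$, $\epsilon_1,\dots,\epsilon_k$ is an $\mathsf{ai}$-path from $\nu$ to $\nu''$ and $\epsilon_{k+1},\dots,\epsilon_h$ is an $\mathsf{ai}$-path from $\nu''$ to $\nu'$. An $\mathsf{ai}$-cycle is an $\mathsf{ai}$-path from a vertex to itself in which no edge appears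 twice. A flow is cycle-free if it has no $\mathsf{ai}$-cycle. $\to_{\mathsf c}^\star$ is the reflexive-transitive closure of $\to_{\mathsf c}$, where $A\to_{\mathsf c}B$ means $B$ results from $A$ by one of these subgraph replacements: (c1) a contraction with upper edges $\epsilon_1,\epsilon_2$ whose lower edge is an upper edge of a cut with other upper edge $\epsilon_3$: replace by a new cocontraction with upper edge $\epsilon_3$ and new lower edges $\delta_1,\delta_2$, and two new cuts with upper edges $\{\epsilon_1,\delta_1\}$ and $\{\epsilon_2,\delta_2\}$; (c2) an interaction with lower edges $\epsilon_3,\epsilon_4$ where $\epsilon_4$ is the upper edge of a cocontraction with lower edges $\epsilon_1,\epsilon_2$: replace by a new contraction with lower edge $\epsilon_3$ and new upper edges $\delta_1,\delta_2$, and two new interactions with lower edges $\{\epsilon_1,\delta_1\}$ and $\{\epsilon_2,\delta_2\}$; (c3) a contraction with upper edges $\epsilon_1,\epsilon_2$ whose lower edge is the upper edge of a cocontraction with lower edges $\epsilon_3,\epsilon_4$: replace by cocontractions $\kappa_1,\kappa_2$ with upper edges $\epsilon_1,\epsilon_2$, contractions $\gamma_3,\gamma_4$ with lower edges $\epsilon_3,\epsilon_4$, and four new edges, one from each $\kappa_i$ to each $\gamma_j$. *)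

theory Defs
  imports Main
begin

datatype kind = Interaction | Cut | Weakening | Coweakening | Contraction | Cocontraction

text \<open>Endpoints of edges: Top (for up), Bot (for lo), or a vertex.\<close>
datatype 'v node = Top | Bot | Vx 'v

record ('v, 'e) flow =
  V   :: "'v set"
  E   :: "'e set"
  lab :: "'v \<Rightarrow> kind"
  up  :: "'e \<Rightarrow> 'v node"
  lo  :: "'e \<Rightarrow> 'v node"

fun n_upper :: "kind \<Rightarrow> nat" where
  "n_upper Interaction = 0" | "n_upper Cut = 2" | "n_upper Weakening = 0"
| "n_upper Coweakening = 1" | "n_upper Contraction = 2" | "n_upper Cocontraction = 1"

fun n_lower :: "kind \<Rightarrow> nat" where
  "n_lower Interaction = 2" | "n_lower Cut = 0" | "n_lower Weakening = 1"
| "n_lower Coweakening = 0" | "n_lower Contraction = 1" | "n_lower Cocontraction = 2"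

definition upper_edges :: "('v,'e) flow \<Rightarrow> 'v \<Rightarrow> 'e set" where
  "upper_edges F v = {e \<in> E F. lo F e = Vx v}"

definition lower_edges :: "('v,'e) flow \<Rightarrow> 'v \<Rightarrow> 'e set" where
  "lower_edges F v = {e \<in> E F. up F e = Vx v}"

definition dpath :: "('v,'e) flow \<Rightarrow> 'v \<Rightarrow> 'e list \<Rightarrow> 'v \<Rightarrow> bool" where
  "dpath F v es v' \<longleftrightarrow> es \<noteq> [] \<and> set es \<subseteq> E F \<and> up F (hd es) = Vx v \<and> lo F (last es) = Vx v'
     \<and> (\<forall>i. Suc i < length es \<longrightarrow> lo F (es ! i) = up F (es ! Suc i))"

definition atomic_flow :: "('v,'e) flow \<Rightarrow> bool" where
  "atomic_flow F \<longleftrightarrow> finite (V F) \<and> finite (E F)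
   \<and> (\<forall>e \<in> E F. up F e \<in> Vx ` V F \<union> {Top} \<and> lo F e \<in> Vx ` V F \<union> {Bot})
   \<and> (\<forall>v \<in> V F. card (upper_edges F v) = n_upper (lab F v) \<and> card (lower_edges F v) = n_lower (lab F v))
   \<and> \<not> (\<exists>v es. dpath F v es v)
   \<and> (\<exists>\<pi> :: 'e \<Rightarrow> bool.
        (\<forall>v \<in> V F. lab F v \<in> {Contraction, Cocontraction} \<longrightarrow>
            (\<forall>e \<in> upper_edges F v \<union> lower_edges F v. \<forall>e' \<in> upper_edges F v \<union> lower_edges F v. \<pi> e = \<pi> e'))
      \<and> (\<forall>v \<in> V F. lab F v \<in> {Interaction, Cut} \<longrightarrow>
            (\<forall>e \<in> upper_edges F v \<union> lower_edges F v. \<forall>e' \<in> upper_edges F v \<union> lower_edges F v. e \<noteq> e' \<longrightarrow> \<pi> e \<noteq> \<pi> e')))"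

inductive aipath :: "('v,'e) flow \<Rightarrow> 'v \<Rightarrow> 'e list \<Rightarrow> 'v \<Rightarrow> bool" for F where
  fwd: "dpath F v es v' \<Longrightarrow> aipath F v es v'"
| bwd: "dpath F v' es v \<Longrightarrow> aipath F v (rev es) v'"
| join: "aipath F v xs w \<Longrightarrow> aipath F w ys v' \<Longrightarrow> w \<in> V F \<Longrightarrow> lab F w \<in> {Interaction, Cut}
          \<Longrightarrow> last xs \<noteq> hd ys \<Longrightarrow> aipath F v (xs @ ys) v'"

definition ai_cycle :: "('v,'e) flow \<Rightarrow> 'v \<Rightarrow> 'e list \<Rightarrow> bool" where
  "ai_cycle F v es \<longleftrightarrow> aipath F v es v \<and> distinct es"

definition cycle_free :: "('v,'e) flow \<Rightarrow> bool" where
  "cycle_free F \<longleftrightarrow> \<not> (\<exists>v es. ai_cycle F v es)"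

text \<open>B is given by vertex set Vs, edge set Es and maps agreeing with l, u, d on Vs resp. Es
  (the maps of a flow are only meaningful on its vertices/edges).\<close>
definition is_flow_on :: "('v,'e) flow \<Rightarrow> 'v set \<Rightarrow> 'e set \<Rightarrow> ('v \<Rightarrow> kind) \<Rightarrow> ('e \<Rightarrow> 'v node) \<Rightarrow> ('e \<Rightarrow> 'v node) \<Rightarrow> bool" where
  "is_flow_on B Vs Es l u d \<longleftrightarrow> V B = Vs \<and> E B = Es \<and> (\<forall>v \<in> Vs. lab B v = l v)
     \<and> (\<forall>e \<in> Es. up B e = u e \<and> lo B e = d e)"

definition step_c1 :: "('v,'e) flow \<Rightarrow> ('v,'e) flow \<Rightarrow> bool" where
  "step_c1 A B \<longleftrightarrow> (\<exists>\<nu> \<mu> \<epsilon> \<epsilon>1 \<epsilon>2 \<epsilon>3 \<kappa> \<chi>1 \<chi>2 \<delta>1 \<delta>2.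
     \<nu> \<in> V A \<and> \<mu> \<in> V A \<and> lab A \<nu> = Contraction \<and> lab A \<mu> = Cut
     \<and> {\<epsilon>, \<epsilon>1, \<epsilon>2, \<epsilon>3} \<subseteq> E A \<and> \<epsilon>1 \<noteq> \<epsilon>2 \<and> \<epsilon>3 \<noteq> \<epsilon>
     \<and> lo A \<epsilon>1 = Vx \<nu> \<and> lo A \<epsilon>2 = Vx \<nu> \<and> up A \<epsilon> = Vx \<nu> \<and> lo A \<epsilon> = Vx \<mu> \<and> lo A \<epsilon>3 = Vx \<mu>
     \<and> \<kappa> \<notin> V A \<and> \<chi>1 \<notin> V A \<and> \<chi>2 \<notin> V A \<and> distinct [\<kappa>, \<chi>1, \<chi>2]
     \<and> \<delta>1 \<notin> E A \<and> \<delta>2 \<notin> E A \<and> \<delta>1 \<noteq> \<delta>2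
     \<and> is_flow_on B (V A - {\<nu>, \<mu>} \<union> {\<kappa>, \<chi>1, \<chi>2}) (E A - {\<epsilon>} \<union> {\<delta>1, \<delta>2})
         ((lab A)(\<kappa> := Cocontraction, \<chi>1 := Cut, \<chi>2 := Cut))
         ((up A)(\<delta>1 := Vx \<kappa>, \<delta>2 := Vx \<kappa>))
         ((lo A)(\<epsilon>3 := Vx \<kappa>, \<epsilon>1 := Vx \<chi>1, \<delta>1 := Vx \<chi>1, \<epsilon>2 := Vx \<chi>2, \<delta>2 := Vx \<chi>2)))"

definition step_c2 :: "('v,'e) flow \<Rightarrow> ('v,'e) flow \<Rightarrow> bool" where
  "step_c2 A B \<longleftrightarrow> (\<exists>\<iota> \<kappa> \<epsilon>1 \<epsilon>2 \<epsilon>3 \<epsilon>4 \<gamma> \<iota>1 \<iota>2 \<delta>1 \<delta>2.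
     \<iota> \<in> V A \<and> \<kappa> \<in> V A \<and> lab A \<iota> = Interaction \<and> lab A \<kappa> = Cocontraction
     \<and> {\<epsilon>1, \<epsilon>2, \<epsilon>3, \<epsilon>4} \<subseteq> E A \<and> \<epsilon>1 \<noteq> \<epsilon>2 \<and> \<epsilon>3 \<noteq> \<epsilon>4
     \<and> up A \<epsilon>3 = Vx \<iota> \<and> up A \<epsilon>4 = Vx \<iota> \<and> lo A \<epsilon>4 = Vx \<kappa> \<and> up A \<epsilon>1 = Vx \<kappa> \<and> up A \<epsilon>2 = Vx \<kappa>
     \<and> \<gamma> \<notin> V A \<and> \<iota>1 \<notin> V A \<and> \<iota>2 \<notin> V A \<and> distinct [\<gamma>, \<iota>1, \<iota>2]
     \<and> \<delta>1 \<notin> E A \<and> \<delta>2 \<notin> E A \<and> \<delta>1 \<noteq> \<delta>2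
     \<and> is_flow_on B (V A - {\<iota>, \<kappa>} \<union> {\<gamma>, \<iota>1, \<iota>2}) (E A - {\<epsilon>4} \<union> {\<delta>1, \<delta>2})
         ((lab A)(\<gamma> := Contraction, \<iota>1 := Interaction, \<iota>2 := Interaction))
         ((up A)(\<epsilon>3 := Vx \<gamma>, \<epsilon>1 := Vx \<iota>1, \<delta>1 := Vx \<iota>1, \<epsilon>2 := Vx \<iota>2, \<delta>2 := Vx \<iota>2))
         ((lo A)(\<delta>1 := Vx \<gamma>, \<delta>2 := Vx \<gamma>)))"

definition step_c3 :: "('v,'e) flow \<Rightarrow> ('v,'e) flow \<Rightarrow> bool" where
  "step_c3 A B \<longleftrightarrow> (\<exists>\<gamma> \<kappa> \<epsilon> \<epsilon>1 \<epsilon>2 \<epsilon>3 \<epsilon>4 \<kappa>1 \<kappa>2 \<gamma>3 \<gamma>4 d13 d14 d23 d24.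
     \<gamma> \<in> V A \<and> \<kappa> \<in> V A \<and> lab A \<gamma> = Contraction \<and> lab A \<kappa> = Cocontraction
     \<and> {\<epsilon>, \<epsilon>1, \<epsilon>2, \<epsilon>3, \<epsilon>4} \<subseteq> E A \<and> \<epsilon>1 \<noteq> \<epsilon>2 \<and> \<epsilon>3 \<noteq> \<epsilon>4
     \<and> lo A \<epsilon>1 = Vx \<gamma> \<and> lo A \<epsilon>2 = Vx \<gamma> \<and> up A \<epsilon> = Vx \<gamma> \<and> lo A \<epsilon> = Vx \<kappa>
     \<and> up A \<epsilon>3 = Vx \<kappa> \<and> up A \<epsilon>4 = Vx \<kappa>
     \<and> \<kappa>1 \<notin> V A \<and> \<kappa>2 \<notin> V A \<and> \<gamma>3 \<notin> V A \<and> \<gamma>4 \<notin> V A \<and> distinct [\<kappa>1, \<kappa>2, \<gamma>3, \<gamma>4]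
     \<and> d13 \<notin> E A \<and> d14 \<notin> E A \<and> d23 \<notin> E A \<and> d24 \<notin> E A \<and> distinct [d13, d14, d23, d24]
     \<and> is_flow_on B (V A - {\<gamma>, \<kappa>} \<union> {\<kappa>1, \<kappa>2, \<gamma>3, \<gamma>4}) (E A - {\<epsilon>} \<union> {d13, d14, d23, d24})
         ((lab A)(\<kappa>1 := Cocontraction, \<kappa>2 := Cocontraction, \<gamma>3 := Contraction, \<gamma>4 := Contraction))
         ((up A)(\<epsilon>3 := Vx \<gamma>3, \<epsilon>4 := Vx \<gamma>4, d13 := Vx \<kappa>1, d14 := Vx \<kappa>1, d23 := Vx \<kappa>2, d24 := Vx \<kappa>2))
         ((lo A)(\<epsilon>1 := Vx \<kappa>1, \<epsilon>2 := Vx \<kappa>2, d13 := Vx \<gamma>3, d14 := Vx \<gamma>4, d23 := Vx \<gamma>3, d24 := Vx \<gamma>4)))"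

definition step_c :: "('v,'e) flow \<Rightarrow> ('v,'e) flow \<Rightarrow> bool" where
  "step_c A B \<longleftrightarrow> step_c1 A B \<or> step_c2 A B \<or> step_c3 A B"

end

theory Submission
  imports Defs "HOL-Library.Transitive_Closure_Table"
begin

text \<open>A polarity \<open>\<pi>\<close> as in the definition of atomic flows orients every edge: a positive edge
  downwards, a negative one upwards. All edges at a contraction or cocontraction have the same sign,
  so a directed path is an oriented walk traversed forwards or backwards; at an interaction or a cut
  both an ai-path and the orientation turn. Hence ai-paths are oriented walks, traversed in one
  direction or the other, and conversely every oriented walk in an atomic flow is an ai-path. An
  atomic flow is therefore cycle-free exactly when its oriented graph admits a ranking \<open>r\<close>, with
  \<open>r a < r b\<close> along every arc.

  Each rewrite replaces its redex by fresh vertices, each originating from a vertex of the redex,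
  and orients the new edges like the removed edge between the corresponding vertices. Composing a
  ranking with this origin map therefore ranks the rewritten flow.\<close>

section \<open>Oriented flows\<close>

definition incident_edges :: "('v,'e) flow \<Rightarrow> 'v \<Rightarrow> 'e set" where
  "incident_edges F v = upper_edges F v \<union> lower_edges F v"

definition locally_valid :: "('v,'e) flow \<Rightarrow> ('e \<Rightarrow> bool) \<Rightarrow> 'v \<Rightarrow> bool" where
  "locally_valid F \<pi> v \<longleftrightarrow>
     card (upper_edges F v) \<le> n_upper (lab F v) \<and> card (lower_edges F v) \<le> n_lower (lab F v)
     \<and> (lab F v \<in> {Contraction, Cocontraction} \<longrightarrow>
          (\<forall>e \<in> incident_edges F v. \<forall>e' \<in> incident_edges F v. \<pi> e = \<pi> e'))
     \<and> (lab F v \<in> {Interaction, Cut} \<longrightarrow>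
          (\<forall>e \<in> incident_edges F v. \<forall>e' \<in> incident_edges F v. e \<noteq> e' \<longrightarrow> \<pi> e \<noteq> \<pi> e'))"

definition attached :: "('v,'e) flow \<Rightarrow> 'e \<Rightarrow> bool" where
  "attached F e \<longleftrightarrow> up F e \<in> Vx ` V F \<union> {Top} \<and> lo F e \<in> Vx ` V F \<union> {Bot}"

definition polarised_flow :: "('v,'e) flow \<Rightarrow> ('e \<Rightarrow> bool) \<Rightarrow> bool" where
  "polarised_flow F \<pi> \<longleftrightarrow> finite (E F) \<and> (\<forall>e \<in> E F. attached F e) \<and> (\<forall>v \<in> V F. locally_valid F \<pi> v)"

definition arc :: "('v,'e) flow \<Rightarrow> ('e \<Rightarrow> bool) \<Rightarrow> 'e \<Rightarrow> 'v \<Rightarrow> 'v \<Rightarrow> bool" where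
  "arc F \<pi> e a b \<longleftrightarrow> e \<in> E F \<and>
     (\<pi> e \<and> up F e = Vx a \<and> lo F e = Vx b \<or> \<not> \<pi> e \<and> lo F e = Vx a \<and> up F e = Vx b)"

inductive awalk :: "('v,'e) flow \<Rightarrow> ('e \<Rightarrow> bool) \<Rightarrow> 'v \<Rightarrow> 'e list \<Rightarrow> 'v \<Rightarrow> bool" for F \<pi> where
  single: "arc F \<pi> e a b \<Longrightarrow> awalk F \<pi> a [e] b"
| snoc: "awalk F \<pi> a es u \<Longrightarrow> arc F \<pi> e u b \<Longrightarrow> awalk F \<pi> a (es @ [e]) b"

definition ranked_flow :: "('v,'e) flow \<Rightarrow> ('e \<Rightarrow> bool) \<Rightarrow> ('v \<Rightarrow> nat) \<Rightarrow> bool" where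
  "ranked_flow F \<pi> r \<longleftrightarrow> polarised_flow F \<pi> \<and> (\<forall>e a b. arc F \<pi> e a b \<longrightarrow> r a < r b)"

lemma finite_incident_edges:
  assumes "finite (E F)"
  shows "finite (upper_edges F v)" "finite (lower_edges F v)"
  using assms unfolding upper_edges_def lower_edges_def by auto

lemma polarised_flow_finite: "polarised_flow F \<pi> \<Longrightarrow> finite (E F)"
  unfolding polarised_flow_def by blast

lemma polarised_flow_attached: "polarised_flow F \<pi> \<Longrightarrow> e \<in> E F \<Longrightarrow> attached F e"
  unfolding polarised_flow_def by blast

lemma polarised_flow_vertex:
  assumes "polarised_flow F \<pi>" "e \<in> E F"
  shows "up F e = Vx a \<Longrightarrow> a \<in> V F" "lo F e = Vx a \<Longrightarrow> a \<in> V F"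
  using polarised_flow_attached[OF assms] unfolding attached_def by auto

lemma polarised_flow_joint:
  assumes P: "polarised_flow F \<pi>" and e: "e \<in> E F" "e' \<in> E F" "lo F e = up F e'"
  obtains u where "u \<in> V F" "e \<in> upper_edges F u" "e' \<in> lower_edges F u"
  using polarised_flow_attached[OF P e(1)] polarised_flow_attached[OF P e(2)] e
  unfolding attached_def upper_edges_def lower_edges_def by force

lemma polarised_flow_locally_valid:
  "polarised_flow F \<pi> \<Longrightarrow> v \<in> V F \<Longrightarrow> locally_valid F \<pi> v"
  unfolding polarised_flow_def by blast

lemma locally_valid_same_sign:
  "locally_valid F \<pi> v \<Longrightarrow> lab F v \<in> {Contraction, Cocontraction} \<Longrightarrow>
   e \<in> incident_edges F v \<Longrightarrow> e' \<in> incident_edges F v \<Longrightarrow> \<pi> e = \<pi> e'"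
  unfolding locally_valid_def by blast

lemma locally_valid_opposite_sign:
  "locally_valid F \<pi> v \<Longrightarrow> lab F v \<in> {Interaction, Cut} \<Longrightarrow>
   e \<in> incident_edges F v \<Longrightarrow> e' \<in> incident_edges F v \<Longrightarrow> e \<noteq> e' \<Longrightarrow> \<pi> e \<noteq> \<pi> e'"
  unfolding locally_valid_def by blast

text \<open>Only contractions and cocontractions have both upper and lower edges.\<close>
lemma polarised_flow_pass_through:
  assumes P: "polarised_flow F \<pi>" and u: "u \<in> V F"
    and e: "e \<in> upper_edges F u" "e' \<in> lower_edges F u"
  shows "\<pi> e = \<pi> e'"
proof -
  have valid: "locally_valid F \<pi> u" using polarised_flow_locally_valid[OF P u] .
  have "0 < card (upper_edges F u)" "0 < card (lower_edges F u)"
    using e finite_incident_edges[OF polarised_flow_finite[OF P]] by (auto simp: card_gt_0_iff)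
  with valid have "lab F u \<in> {Contraction, Cocontraction}"
    unfolding locally_valid_def by (cases "lab F u") auto
  then show ?thesis
    using locally_valid_same_sign[OF valid] e unfolding incident_edges_def by blast
qed

lemma polarised_flow_cut_interaction:
  assumes P: "polarised_flow F \<pi>" and w: "w \<in> V F"
  shows "lab F w = Cut \<Longrightarrow> lower_edges F w = {}" "lab F w = Interaction \<Longrightarrow> upper_edges F w = {}"
  using polarised_flow_locally_valid[OF P w] finite_incident_edges[OF polarised_flow_finite[OF P]]
  unfolding locally_valid_def by auto

lemma interaction_cut_arc_unique:
  assumes P: "polarised_flow F \<pi>" and w: "w \<in> V F" "lab F w \<in> {Interaction, Cut}"
    and arcs: "arc F \<pi> e a w \<and> arc F \<pi> e' b w \<or> arc F \<pi> e w a \<and> arc F \<pi> e' w b"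
  shows "e = e'"
proof (rule ccontr)
  assume ne: "e \<noteq> e'"
  have "e \<in> incident_edges F w \<and> e' \<in> incident_edges F w \<and> \<pi> e = \<pi> e'"
    using w(2) arcs polarised_flow_cut_interaction[OF P w(1)]
    unfolding incident_edges_def upper_edges_def lower_edges_def arc_def by auto
  then show False
    using locally_valid_opposite_sign[OF polarised_flow_locally_valid[OF P w(1)] w(2) _ _ ne] by blast
qed

lemma awalk_nonempty: "awalk F \<pi> a es b \<Longrightarrow> es \<noteq> []"
  by (induction rule: awalk.induct) auto

lemma awalk_last_arc: "awalk F \<pi> a es b \<Longrightarrow> \<exists>x. arc F \<pi> (last es) x b"
  by (induction rule: awalk.induct) auto

lemma awalk_hd_arc: "awalk F \<pi> a es b \<Longrightarrow> \<exists>y. arc F \<pi> (hd es) a y"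
proof (induction rule: awalk.induct)
  case (snoc a es u e b)
  then show ?case using awalk_nonempty[OF snoc.hyps(1)] by simp
qed auto

lemma awalk_append: "awalk F \<pi> b ys c \<Longrightarrow> awalk F \<pi> a xs b \<Longrightarrow> awalk F \<pi> a (xs @ ys) c"
proof (induction rule: awalk.induct)
  case (single e b c)
  then show ?case by (rule awalk.snoc[rotated])
next
  case (snoc b ys u e c)
  then show ?case using awalk.snoc[of F \<pi> a "xs @ ys" u e c] by simp
qed

lemma awalk_Cons: "arc F \<pi> e a b \<Longrightarrow> awalk F \<pi> b es c \<Longrightarrow> awalk F \<pi> a (e # es) c"
  using awalk_append[of F \<pi> b es c a "[e]"] awalk.single[of F \<pi> e a b] by simp

lemma awalk_rank:
  fixes r :: "'v \<Rightarrow> 'a::order"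
  assumes "\<forall>e a b. arc F \<pi> e a b \<longrightarrow> r a < r b"
  shows "awalk F \<pi> a es b \<Longrightarrow> r a < r b"
proof (induction rule: awalk.induct)
  case (snoc a es u e b)
  have "r u < r b" using assms snoc.hyps(2) by blast
  with snoc.IH show ?case by simp
qed (use assms in blast)

lemma dpath_Cons_tail:
  assumes "dpath F v (e # es) v'" "es \<noteq> []"
  shows "dpath F u es v' \<longleftrightarrow> lo F e = Vx u" "lo F e = up F (hd es)"
proof -
  have "lo F ((e # es) ! 0) = up F ((e # es) ! Suc 0)"
    using assms unfolding dpath_def by auto
  then show joint: "lo F e = up F (hd es)" using assms(2) by (simp add: hd_conv_nth)
  show "dpath F u es v' \<longleftrightarrow> lo F e = Vx u"
    using assms joint unfolding dpath_def by auto
qed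

section \<open>Ranked flows are cycle-free\<close>

lemma dpath_awalk:
  assumes P: "polarised_flow F \<pi>"
  shows "dpath F v es v' \<Longrightarrow> \<exists>d. (\<forall>e \<in> set es. \<pi> e = d)
           \<and> (if d then awalk F \<pi> v es v' else awalk F \<pi> v' (rev es) v)"
proof (induction es arbitrary: v)
  case Nil
  then show ?case by (simp add: dpath_def)
next
  case (Cons e es)
  then have e: "e \<in> E F" "up F e = Vx v" unfolding dpath_def by auto
  show ?case
  proof (cases "es = []")
    case True
    then have "lo F e = Vx v'" using Cons.prems unfolding dpath_def by simp
    then show ?thesis
      using True e by (intro exI[of _ "\<pi> e"]) (auto intro: awalk.single simp: arc_def)
  next
    case False
    have hd: "hd es \<in> E F" using Cons.prems False unfolding dpath_def by auto
    obtain u where u: "u \<in> V F" "e \<in> upper_edges F u" "hd es \<in> lower_edges F u"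
      using polarised_flow_joint[OF P e(1) hd dpath_Cons_tail(2)[OF Cons.prems False]] .
    then have lo: "lo F e = Vx u" unfolding upper_edges_def by blast
    obtain d where d: "\<forall>e \<in> set es. \<pi> e = d" "if d then awalk F \<pi> u es v' else awalk F \<pi> v' (rev es) u"
      using Cons.IH dpath_Cons_tail(1)[OF Cons.prems False] lo by blast
    have "\<pi> e = d"
      using polarised_flow_pass_through[OF P u] d(1) False by simp
    then have "if d then arc F \<pi> e v u else arc F \<pi> e u v"
      using e lo unfolding arc_def by auto
    then have "if d then awalk F \<pi> v (e # es) v' else awalk F \<pi> v' (rev (e # es)) v"
      using d(2) awalk_Cons[of F \<pi> e v u es v'] awalk.snoc[of F \<pi> v' "rev es" u e v]
      by (cases d) simp_all
    then show ?thesis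
      using d(1) \<open>\<pi> e = d\<close> by (intro exI[of _ d]) simp
  qed
qed

lemma aipath_awalk:
  assumes P: "polarised_flow F \<pi>"
  shows "aipath F v es v' \<Longrightarrow> awalk F \<pi> v es v' \<or> awalk F \<pi> v' (rev es) v"
proof (induction rule: aipath.induct)
  case (fwd v es v')
  then obtain d where "if d then awalk F \<pi> v es v' else awalk F \<pi> v' (rev es) v"
    using dpath_awalk[OF P] by blast
  then show ?case by (cases d) simp_all
next
  case (bwd v' es v)
  then obtain d where "if d then awalk F \<pi> v' es v else awalk F \<pi> v (rev es) v'"
    using dpath_awalk[OF P] by blast
  then show ?case by (cases d) simp_all
next
  case (join v xs w ys v')
  have "\<not> (awalk F \<pi> v xs w \<and> awalk F \<pi> v' (rev ys) w)"
  proof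
    assume "awalk F \<pi> v xs w \<and> awalk F \<pi> v' (rev ys) w"
    then obtain a b where "arc F \<pi> (last xs) a w" "arc F \<pi> (hd ys) b w"
      using awalk_last_arc[of F \<pi> v xs w] awalk_last_arc[of F \<pi> v' "rev ys" w]
      by (auto simp: last_rev)
    then show False using interaction_cut_arc_unique[OF P join.hyps(3,4)] join.hyps(5) by blast
  qed
  moreover have "\<not> (awalk F \<pi> w (rev xs) v \<and> awalk F \<pi> w ys v')"
  proof
    assume "awalk F \<pi> w (rev xs) v \<and> awalk F \<pi> w ys v'"
    then obtain a b where "arc F \<pi> (last xs) w a" "arc F \<pi> (hd ys) w b"
      using awalk_hd_arc[of F \<pi> w "rev xs" v] awalk_hd_arc[of F \<pi> w ys v']
      by (auto simp: hd_rev)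
    then show False using interaction_cut_arc_unique[OF P join.hyps(3,4)] join.hyps(5) by blast
  qed
  ultimately show ?case
    using join.IH awalk_append[of F \<pi> w ys v' v xs] awalk_append[of F \<pi> w "rev xs" v v' "rev ys"]
    by auto
qed

lemma ranked_flow_cycle_free:
  assumes "ranked_flow F \<pi> r"
  shows "cycle_free F"
proof -
  have "\<not> aipath F v es v" for v es
    using aipath_awalk[of F \<pi> v es v] awalk_rank[of F \<pi> r v _ v] assms
    unfolding ranked_flow_def by blast
  then show ?thesis unfolding cycle_free_def ai_cycle_def by blast
qed

section \<open>Cycle-free atomic flows are ranked\<close>

lemma atomic_flow_polarised:
  fixes F :: "('v,'e) flow"
  assumes "atomic_flow F"
  shows "\<exists>\<pi>. polarised_flow F \<pi>"
proof -
  obtain \<pi> :: "'e \<Rightarrow> bool" where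
    "\<forall>v \<in> V F. lab F v \<in> {Contraction, Cocontraction} \<longrightarrow>
       (\<forall>e \<in> incident_edges F v. \<forall>e' \<in> incident_edges F v. \<pi> e = \<pi> e')"
    "\<forall>v \<in> V F. lab F v \<in> {Interaction, Cut} \<longrightarrow>
       (\<forall>e \<in> incident_edges F v. \<forall>e' \<in> incident_edges F v. e \<noteq> e' \<longrightarrow> \<pi> e \<noteq> \<pi> e')"
    using assms unfolding atomic_flow_def incident_edges_def by blast
  moreover have "\<forall>v \<in> V F. card (upper_edges F v) \<le> n_upper (lab F v) \<and> card (lower_edges F v) \<le> n_lower (lab F v)"
    using assms unfolding atomic_flow_def by simp
  ultimately have "\<forall>v \<in> V F. locally_valid F \<pi> v"
    unfolding locally_valid_def by blast
  moreover have "finite (E F)" "\<forall>e \<in> E F. attached F e"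
    using assms unfolding atomic_flow_def attached_def by simp_all
  ultimately show ?thesis unfolding polarised_flow_def by blast
qed

lemma atomic_flow_no_loop:
  assumes "atomic_flow F" "e \<in> E F" "up F e = Vx u"
  shows "lo F e \<noteq> Vx u"
proof
  assume "lo F e = Vx u"
  then have "dpath F u [e] u" using assms(2,3) unfolding dpath_def by simp
  then show False using assms(1) unfolding atomic_flow_def by blast
qed

lemma dpath_snoc:
  assumes "dpath F v es u" "e \<in> E F" "up F e = Vx u" "lo F e = Vx b"
  shows "dpath F v (es @ [e]) b"
  unfolding dpath_def
proof (intro conjI allI impI)
  show "set (es @ [e]) \<subseteq> E F" "up F (hd (es @ [e])) = Vx v"
    using assms unfolding dpath_def by auto
  fix i assume i: "Suc i < length (es @ [e])"
  show "lo F ((es @ [e]) ! i) = up F ((es @ [e]) ! Suc i)"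
  proof (cases "Suc i < length es")
    case True
    then show ?thesis using assms(1) unfolding dpath_def by (simp add: nth_append)
  next
    case False
    then have "i = length es - 1" "es \<noteq> []" "lo F (last es) = Vx u"
      using i assms(1) unfolding dpath_def by auto
    then show ?thesis using assms(3) by (simp add: nth_append last_conv_nth)
  qed
qed (use assms in simp_all)

lemma dpath_Cons:
  assumes "dpath F u es v" "e \<in> E F" "up F e = Vx b" "lo F e = Vx u"
  shows "dpath F b (e # es) v"
  unfolding dpath_def
proof (intro conjI allI impI)
  show "set (e # es) \<subseteq> E F" "lo F (last (e # es)) = Vx v"
    using assms unfolding dpath_def by auto
  fix i assume i: "Suc i < length (e # es)"
  show "lo F ((e # es) ! i) = up F ((e # es) ! Suc i)"
  proof (cases i)
    case 0
    have "es \<noteq> []" "up F (hd es) = Vx u" using assms(1) unfolding dpath_def by blast+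
    then show ?thesis using 0 assms(4) by (simp add: hd_conv_nth)
  next
    case (Suc j)
    then show ?thesis using assms(1) i unfolding dpath_def by simp
  qed
qed (use assms in simp_all)

lemma aipath_nonempty: "aipath F v es v' \<Longrightarrow> es \<noteq> []"
  by (induction rule: aipath.induct) (auto simp: dpath_def)

lemma aipath_snoc_down:
  "aipath F v xs u \<Longrightarrow> lo F (last xs) = Vx u \<Longrightarrow> up F (last xs) \<noteq> Vx u \<Longrightarrow>
   e \<in> E F \<Longrightarrow> up F e = Vx u \<Longrightarrow> lo F e = Vx b \<Longrightarrow> aipath F v (xs @ [e]) b"
proof (induction arbitrary: b rule: aipath.induct)
  case (fwd v es v')
  then show ?case by (intro aipath.fwd dpath_snoc)
next
  case (bwd v' es v)
  then show ?case by (auto simp: dpath_def last_rev)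
next
  case (join v xs w ys v')
  then show ?case
    using aipath.join[OF join.hyps(1) _ join.hyps(3,4), of "ys @ [e]" b] aipath_nonempty[OF join.hyps(2)]
    by simp
qed

lemma aipath_snoc_up:
  "aipath F v xs u \<Longrightarrow> up F (last xs) = Vx u \<Longrightarrow> lo F (last xs) \<noteq> Vx u \<Longrightarrow>
   e \<in> E F \<Longrightarrow> lo F e = Vx u \<Longrightarrow> up F e = Vx b \<Longrightarrow> aipath F v (xs @ [e]) b"
proof (induction arbitrary: b rule: aipath.induct)
  case (fwd v es v')
  then show ?case by (auto simp: dpath_def)
next
  case (bwd v' es v)
  then show ?case using aipath.bwd[OF dpath_Cons[OF bwd.hyps]] by simp
next
  case (join v xs w ys v')
  then show ?case
    using aipath.join[OF join.hyps(1) _ join.hyps(3,4), of "ys @ [e]" b] aipath_nonempty[OF join.hyps(2)]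
    by simp
qed

lemma arc_aipath:
  assumes "arc F \<pi> e a b"
  shows "aipath F a [e] b"
proof (cases "\<pi> e")
  case True
  then have "dpath F a [e] b" using assms unfolding arc_def dpath_def by simp
  then show ?thesis by (rule aipath.fwd)
next
  case False
  then have "dpath F b [e] a" using assms unfolding arc_def dpath_def by simp
  then show ?thesis using aipath.bwd by fastforce
qed

text \<open>Where an oriented walk changes polarity it passes through two upper or two lower edges of
  a vertex, which therefore is a cut or an interaction.\<close>
lemma polarised_flow_turn:
  assumes P: "polarised_flow F \<pi>" and arcs: "arc F \<pi> e0 x u" "arc F \<pi> e u b" and sign: "\<pi> e0 \<noteq> \<pi> e"
  shows "u \<in> V F" "lab F u \<in> {Interaction, Cut}"
proof -
  have E: "e0 \<in> E F" "e \<in> E F" and ne: "e0 \<noteq> e" using arcs sign unfolding arc_def by auto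
  then show u: "u \<in> V F" using arcs polarised_flow_vertex[OF P] unfolding arc_def by metis
  have fin: "finite (E F)" using polarised_flow_finite[OF P] .
  have LV: "locally_valid F \<pi> u" using polarised_flow_locally_valid[OF P u] .
  have "{e0, e} \<subseteq> upper_edges F u \<or> {e0, e} \<subseteq> lower_edges F u"
    using arcs sign unfolding arc_def upper_edges_def lower_edges_def by auto
  moreover have "card {e0, e} = 2" using ne by simp
  ultimately have "2 \<le> card (upper_edges F u) \<or> 2 \<le> card (lower_edges F u)"
    using card_mono[OF finite_incident_edges(1)[OF fin]] card_mono[OF finite_incident_edges(2)[OF fin]]
    by metis
  moreover have "lab F u \<notin> {Contraction, Cocontraction}"
    using locally_valid_same_sign[OF LV, of e0 e] arcs sign
    unfolding arc_def incident_edges_def upper_edges_def lower_edges_def by auto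
  ultimately show "lab F u \<in> {Interaction, Cut}"
    using LV unfolding locally_valid_def by (cases "lab F u") auto
qed

text \<open>Where the polarity is constant the walk extends a directed path; where it changes, the walk
  joins at an interaction or a cut.\<close>
lemma awalk_aipath:
  assumes A: "atomic_flow F" and P: "polarised_flow F \<pi>"
  shows "awalk F \<pi> a es b \<Longrightarrow> aipath F a es b"
proof (induction rule: awalk.induct)
  case (single e a b)
  then show ?case by (rule arc_aipath)
next
  case (snoc a es u e b)
  obtain x where last: "arc F \<pi> (last es) x u" using awalk_last_arc[OF snoc.hyps(1)] by blast
  show ?case
  proof (cases "\<pi> (last es) = \<pi> e")
    case True
    then have "lo F (last es) = Vx u \<and> up F e = Vx u \<and> lo F e = Vx b \<or>
               up F (last es) = Vx u \<and> lo F e = Vx u \<and> up F e = Vx b"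
      using last snoc.hyps(2) unfolding arc_def by auto
    moreover have "up F (last es) \<noteq> Vx u \<or> lo F (last es) \<noteq> Vx u"
      using last atomic_flow_no_loop[OF A] unfolding arc_def by blast
    ultimately show ?thesis
      using aipath_snoc_down[OF snoc.IH] aipath_snoc_up[OF snoc.IH] snoc.hyps(2)
      unfolding arc_def by blast
  next
    case False
    have "last es \<noteq> hd [e]" using False by auto
    then show ?thesis
      by (rule aipath.join[OF snoc.IH arc_aipath[OF snoc.hyps(2)] polarised_flow_turn[OF P last snoc.hyps(2) False]])
  qed
qed

lemma finite_acyclic_rank:
  fixes R :: "'a \<Rightarrow> 'a \<Rightarrow> bool"
  assumes fin: "finite S" and dom: "\<And>a b. R a b \<Longrightarrow> a \<in> S" and acyclic: "\<And>a. \<not> R\<^sup>+\<^sup>+ a a"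
  shows "\<exists>r :: 'a \<Rightarrow> nat. \<forall>a b. R a b \<longrightarrow> r a < r b"
proof (intro exI allI impI)
  fix a b assume ab: "R a b"
  have "{x. R\<^sup>+\<^sup>+ x b} \<subseteq> S" using dom by (auto dest: tranclpD)
  then have "finite {x. R\<^sup>+\<^sup>+ x b}" using fin by (rule finite_subset)
  moreover have "{x. R\<^sup>+\<^sup>+ x a} \<subset> {x. R\<^sup>+\<^sup>+ x b}"
    using ab acyclic by (auto intro: tranclp.trancl_into_trancl)
  ultimately show "card {x. R\<^sup>+\<^sup>+ x a} < card {x. R\<^sup>+\<^sup>+ x b}"
    by (rule psubset_card_mono)
qed

lemma arc_tail_unique: "arc F \<pi> e a b \<Longrightarrow> arc F \<pi> e a' b' \<Longrightarrow> a = a'"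
  unfolding arc_def by auto

text \<open>The edges are distinct because an edge determines the tail of its arc.\<close>
lemma rtrancl_path_awalk:
  "rtrancl_path (\<lambda>a b. \<exists>e. arc F \<pi> e a b) x xs y \<Longrightarrow> distinct (x # xs) \<Longrightarrow> xs \<noteq> [] \<Longrightarrow>
   \<exists>es. awalk F \<pi> x es y \<and> distinct es \<and> (\<forall>e \<in> set es. \<forall>a b. arc F \<pi> e a b \<longrightarrow> a \<in> set (x # butlast xs))"
proof (induction rule: rtrancl_path.induct)
  case (base x)
  then show ?case by simp
next
  case (step x y ys z)
  obtain e0 where e0: "arc F \<pi> e0 x y" using step.hyps(1) by blast
  have tail_e0: "\<forall>a b. arc F \<pi> e0 a b \<longrightarrow> a = x" using arc_tail_unique[OF e0] by blast
  show ?case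
  proof (cases "ys = []")
    case True
    then have "y = z" using step.hyps(2) by (auto elim: rtrancl_path.cases)
    then have "awalk F \<pi> x [e0] z" using awalk.single[OF e0] by simp
    then show ?thesis using tail_e0 True by (intro exI[of _ "[e0]"]) simp
  next
    case False
    have "distinct (y # ys)" using step.prems(1) by simp
    then obtain es where es: "awalk F \<pi> y es z" "distinct es"
      "\<forall>e \<in> set es. \<forall>a b. arc F \<pi> e a b \<longrightarrow> a \<in> set (y # butlast ys)"
      using step.IH False by blast
    have "x \<notin> set (y # butlast ys)" using step.prems(1) in_set_butlastD by force
    then have "e0 \<notin> set es" using es(3) e0 by blast
    moreover have "set (x # butlast (y # ys)) = insert x (set (y # butlast ys))" using False by simp
    ultimately show ?thesis
      using awalk_Cons[OF e0 es(1)] es(2,3) tail_e0 by (intro exI[of _ "e0 # es"]) simp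
  qed
qed

lemma cycle_free_arcs_acyclic:
  assumes A: "atomic_flow F" and P: "polarised_flow F \<pi>" and C: "cycle_free F"
  shows "\<not> (\<lambda>a b. \<exists>e. arc F \<pi> e a b)\<^sup>+\<^sup>+ v v"
proof
  define R where "R = (\<lambda>a b. \<exists>e. arc F \<pi> e a b)"
  have no_cycle: "\<not> (awalk F \<pi> a es a \<and> distinct es)" for a es
  proof
    assume "awalk F \<pi> a es a \<and> distinct es"
    then have "ai_cycle F a es" using awalk_aipath[OF A P] unfolding ai_cycle_def by blast
    with C show False unfolding cycle_free_def by blast
  qed
  assume "R\<^sup>+\<^sup>+ v v"
  then obtain u where "R v u" "R\<^sup>*\<^sup>* u v" using tranclpD by metis
  then obtain e0 xs0 where e0: "arc F \<pi> e0 v u" and "rtrancl_path R u xs0 v"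
    using rtranclp_eq_rtrancl_path[of R u v] unfolding R_def by blast
  then obtain xs where path: "rtrancl_path R u xs v" "distinct (u # xs)"
    using rtrancl_path_distinct[of R u xs0 v] by blast
  show False
  proof (cases "xs = []")
    case True
    then have "u = v" using path(1) by (auto elim: rtrancl_path.cases)
    then show False using no_cycle[of v "[e0]"] awalk.single[OF e0] by simp
  next
    case False
    obtain es where es: "awalk F \<pi> u es v" "distinct es"
      "\<forall>e \<in> set es. \<forall>a b. arc F \<pi> e a b \<longrightarrow> a \<in> set (u # butlast xs)"
      using rtrancl_path_awalk[OF path(1)[unfolded R_def] path(2) False] by blast
    have "u # xs = (u # butlast xs) @ [v]"
      using rtrancl_path_last[OF path(1) False] append_butlast_last_id[OF False] by simp
    then have "distinct ((u # butlast xs) @ [v])" using path(2) by metis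
    then have "v \<notin> set (u # butlast xs)" by auto
    then have "e0 \<notin> set es" using es(3) e0 by blast
    then show False using no_cycle[of v "e0 # es"] awalk_Cons[OF e0 es(1)] es(2) by simp
  qed
qed

lemma atomic_flow_ranked:
  assumes A: "atomic_flow F" and C: "cycle_free F"
  shows "\<exists>\<pi> r. ranked_flow F \<pi> r"
proof -
  obtain \<pi> where P: "polarised_flow F \<pi>" using atomic_flow_polarised[OF A] by blast
  define R where "R = (\<lambda>a b. \<exists>e. arc F \<pi> e a b)"
  have fin: "finite (V F)" using A unfolding atomic_flow_def by blast
  have "\<exists>r :: _ \<Rightarrow> nat. \<forall>a b. R a b \<longrightarrow> r a < r b"
  proof (rule finite_acyclic_rank[OF fin])
    show "R a b \<Longrightarrow> a \<in> V F" for a b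
      using polarised_flow_vertex[OF P] unfolding R_def arc_def by blast
    show "\<not> R\<^sup>+\<^sup>+ a a" for a
      using cycle_free_arcs_acyclic[OF A P C] unfolding R_def .
  qed
  then show ?thesis using P unfolding ranked_flow_def R_def by blast
qed

section \<open>Rewriting preserves rankings\<close>

lemma is_flow_onD:
  assumes "is_flow_on B Vs Es l u d"
  shows "V B = Vs" "E B = Es" "v \<in> Vs \<Longrightarrow> lab B v = l v"
    "e \<in> Es \<Longrightarrow> up B e = u e" "e \<in> Es \<Longrightarrow> lo B e = d e"
  using assms unfolding is_flow_on_def by auto

lemma polarised_flow_upper_edges_eq:
  assumes P: "polarised_flow F \<pi>" and v: "v \<in> V F"
    and X: "finite X" "X \<subseteq> upper_edges F v" "n_upper (lab F v) \<le> card X"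
  shows "upper_edges F v = X"
proof -
  have "finite (upper_edges F v)"
    using finite_incident_edges(1)[OF polarised_flow_finite[OF P]] .
  moreover have "card (upper_edges F v) \<le> card X"
    using polarised_flow_locally_valid[OF P v] X(3) unfolding locally_valid_def by linarith
  ultimately show ?thesis using card_seteq X(2) by blast
qed

lemma polarised_flow_lower_edges_eq:
  assumes P: "polarised_flow F \<pi>" and v: "v \<in> V F"
    and X: "finite X" "X \<subseteq> lower_edges F v" "n_lower (lab F v) \<le> card X"
  shows "lower_edges F v = X"
proof -
  have "finite (lower_edges F v)"
    using finite_incident_edges(2)[OF polarised_flow_finite[OF P]] .
  moreover have "card (lower_edges F v) \<le> card X"
    using polarised_flow_locally_valid[OF P v] X(3) unfolding locally_valid_def by linarith
  ultimately show ?thesis using card_seteq X(2) by blast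
qed

lemma locally_valid_intro:
  assumes "upper_edges F v \<subseteq> U" "lower_edges F v \<subseteq> L" "finite U" "finite L"
    and "card U \<le> n_upper (lab F v)" "card L \<le> n_lower (lab F v)"
    and "lab F v \<in> {Contraction, Cocontraction} \<Longrightarrow> \<forall>e \<in> U \<union> L. \<forall>e' \<in> U \<union> L. \<pi> e = \<pi> e'"
    and "lab F v \<in> {Interaction, Cut} \<Longrightarrow> \<forall>e \<in> U \<union> L. \<forall>e' \<in> U \<union> L. e \<noteq> e' \<longrightarrow> \<pi> e \<noteq> \<pi> e'"
  shows "locally_valid F \<pi> v"
proof -
  have "card (upper_edges F v) \<le> card U" "card (lower_edges F v) \<le> card L"
    using assms(1-4) by (simp_all add: card_mono)
  moreover have "incident_edges F v \<subseteq> U \<union> L"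
    using assms(1,2) unfolding incident_edges_def by blast
  ultimately show ?thesis
    using assms(5-8) unfolding locally_valid_def by (meson order_trans subsetD)
qed

lemma arc_transfer:
  assumes "arc B \<pi>' e a b" "e0 \<in> E A" "\<pi>' e = \<pi> e0"
    "up A e0 = map_node h (up B e)" "lo A e0 = map_node h (lo B e)"
  shows "arc A \<pi> e0 (h a) (h b)"
  using assms unfolding arc_def by auto

lemma arc_transfer_reversed:
  assumes "arc B \<pi>' e a b" "e0 \<in> E A" "\<pi>' e = (\<not> \<pi> e0)"
    "up A e0 = map_node h (lo B e)" "lo A e0 = map_node h (up B e)"
  shows "arc A \<pi> e0 (h a) (h b)"
  using assms unfolding arc_def by auto

lemma map_node_attached:
  assumes "attached F e" "\<And>v. v \<in> V F \<Longrightarrow> h v = v"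
  shows "map_node h (up F e) = up F e" "map_node h (lo F e) = lo F e"
  using assms unfolding attached_def by auto

text \<open>The map \<open>h\<close> sends each vertex of \<open>B\<close> to the vertex of \<open>A\<close> it originates from.\<close>
locale flow_rewrite =
  fixes A B :: "('v,'e) flow" and h :: "'v \<Rightarrow> 'v"
  assumes h_id: "v \<in> V A \<Longrightarrow> h v = v"
    and up_old: "e \<in> E B \<Longrightarrow> e \<in> E A \<Longrightarrow> up A e = map_node h (up B e)"
    and lo_old: "e \<in> E B \<Longrightarrow> e \<in> E A \<Longrightarrow> lo A e = map_node h (lo B e)"
    and up_new: "e \<in> E B \<Longrightarrow> e \<notin> E A \<Longrightarrow> \<exists>x. x \<notin> V A \<and> up B e = Vx x"
    and lo_new: "e \<in> E B \<Longrightarrow> e \<notin> E A \<Longrightarrow> \<exists>x. x \<notin> V A \<and> lo B e = Vx x"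
    and lab_old: "v \<in> V A \<Longrightarrow> v \<in> V B \<Longrightarrow> lab B v = lab A v"
begin

lemma upper_edges_subset: "v \<in> V A \<Longrightarrow> upper_edges B v \<subseteq> upper_edges A v"
  using lo_old lo_new h_id unfolding upper_edges_def by fastforce

lemma lower_edges_subset: "v \<in> V A \<Longrightarrow> lower_edges B v \<subseteq> lower_edges A v"
  using up_old up_new h_id unfolding lower_edges_def by fastforce

lemma attached_B:
  assumes "\<And>e. e \<in> E A \<Longrightarrow> attached A e" "e \<in> E B"
    and "\<And>x. up B e = Vx x \<Longrightarrow> x \<in> V B" "\<And>x. lo B e = Vx x \<Longrightarrow> x \<in> V B"
  shows "attached B e"
proof (cases "e \<in> E A")
  case True
  then show ?thesis
    using assms(1)[OF True] assms(3,4) up_old[OF assms(2) True] lo_old[OF assms(2) True]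
    unfolding attached_def by (cases "up B e"; cases "lo B e") auto
next
  case False
  then show ?thesis using assms up_new[OF assms(2) False] lo_new[OF assms(2) False]
    unfolding attached_def by auto
qed

lemma locally_valid_old:
  assumes fin: "finite (E A)" and valid: "locally_valid A \<pi> v" and v: "v \<in> V A" "v \<in> V B"
    and \<pi>': "\<And>e. e \<in> E A \<Longrightarrow> \<pi>' e = \<pi> e"
  shows "locally_valid B \<pi>' v"
proof (rule locally_valid_intro)
  show "upper_edges B v \<subseteq> upper_edges A v" "lower_edges B v \<subseteq> lower_edges A v"
    using upper_edges_subset[OF v(1)] lower_edges_subset[OF v(1)] .
  show "finite (upper_edges A v)" "finite (lower_edges A v)"
    using finite_incident_edges[OF fin] .
  have same: "\<pi>' e = \<pi> e" if "e \<in> upper_edges A v \<union> lower_edges A v" for e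
    using that \<pi>' unfolding upper_edges_def lower_edges_def by blast
  have lab: "lab B v = lab A v" using lab_old[OF v] .
  show "card (upper_edges A v) \<le> n_upper (lab B v)" "card (lower_edges A v) \<le> n_lower (lab B v)"
    using valid lab unfolding locally_valid_def by simp_all
  show "lab B v \<in> {Contraction, Cocontraction} \<Longrightarrow>
      \<forall>e \<in> upper_edges A v \<union> lower_edges A v. \<forall>e' \<in> upper_edges A v \<union> lower_edges A v. \<pi>' e = \<pi>' e'"
    using locally_valid_same_sign[OF valid] same lab unfolding incident_edges_def by metis
  show "lab B v \<in> {Interaction, Cut} \<Longrightarrow>
      \<forall>e \<in> upper_edges A v \<union> lower_edges A v. \<forall>e' \<in> upper_edges A v \<union> lower_edges A v.
        e \<noteq> e' \<longrightarrow> \<pi>' e \<noteq> \<pi>' e'"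
    using locally_valid_opposite_sign[OF valid] same lab unfolding incident_edges_def by metis
qed

theorem ranked_flow_rewrite:
  assumes ranked: "ranked_flow A \<pi> r" and fin: "finite (E B)"
    and endpoints: "\<And>e x. e \<in> E B \<Longrightarrow> up B e = Vx x \<or> lo B e = Vx x \<Longrightarrow> x \<in> V B"
    and new_vertices: "\<And>v. v \<in> V B \<Longrightarrow> v \<notin> V A \<Longrightarrow> locally_valid B \<pi>' v"
    and polarity_old: "\<And>e. e \<in> E A \<Longrightarrow> \<pi>' e = \<pi> e"
    and new_arcs: "\<And>e a b. e \<notin> E A \<Longrightarrow> arc B \<pi>' e a b \<Longrightarrow> \<exists>e0. arc A \<pi> e0 (h a) (h b)"
  shows "ranked_flow B \<pi>' (r \<circ> h)"
proof -
  have P: "polarised_flow A \<pi>" and rank: "\<And>e a b. arc A \<pi> e a b \<Longrightarrow> r a < r b"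
    using ranked unfolding ranked_flow_def by blast+
  have "locally_valid B \<pi>' v" if v: "v \<in> V B" for v
  proof (cases "v \<in> V A")
    case True
    show ?thesis
      by (rule locally_valid_old[OF polarised_flow_finite[OF P] polarised_flow_locally_valid[OF P True] True v])
        (rule polarity_old)
  next
    case False
    then show ?thesis using new_vertices v by blast
  qed
  moreover have "r (h a) < r (h b)" if "arc B \<pi>' e a b" for e a b
  proof (cases "e \<in> E A")
    case True
    have "e \<in> E B" using that unfolding arc_def by blast
    then have "arc A \<pi> e (h a) (h b)"
      using arc_transfer[where h = h and \<pi> = \<pi> and \<pi>' = \<pi>', OF that True polarity_old[OF True]]
        up_old lo_old True by blast
    then show ?thesis by (rule rank)
  next
    case False
    then show ?thesis using new_arcs that rank by blast
  qed
  moreover have "attached B e" if "e \<in> E B" for e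
    using attached_B polarised_flow_attached[OF P] that endpoints by blast
  ultimately show ?thesis
    using fin unfolding ranked_flow_def polarised_flow_def by simp
qed

end

locale c1_redex =
  fixes A B :: "('v,'e) flow" and \<pi> :: "'e \<Rightarrow> bool" and r :: "'v \<Rightarrow> nat"
    and \<nu> \<mu> \<kappa> \<chi>1 \<chi>2 :: 'v and \<epsilon> \<epsilon>1 \<epsilon>2 \<epsilon>3 \<delta>1 \<delta>2 :: 'e
  assumes ranked: "ranked_flow A \<pi> r"
    and redex: "\<nu> \<in> V A" "\<mu> \<in> V A" "lab A \<nu> = Contraction" "lab A \<mu> = Cut"
      "{\<epsilon>, \<epsilon>1, \<epsilon>2, \<epsilon>3} \<subseteq> E A" "\<epsilon>1 \<noteq> \<epsilon>2" "\<epsilon>3 \<noteq> \<epsilon>"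
      "lo A \<epsilon>1 = Vx \<nu>" "lo A \<epsilon>2 = Vx \<nu>" "up A \<epsilon> = Vx \<nu>" "lo A \<epsilon> = Vx \<mu>" "lo A \<epsilon>3 = Vx \<mu>"
    and fresh: "\<kappa> \<notin> V A" "\<chi>1 \<notin> V A" "\<chi>2 \<notin> V A" "distinct [\<kappa>, \<chi>1, \<chi>2]"
      "\<delta>1 \<notin> E A" "\<delta>2 \<notin> E A" "\<delta>1 \<noteq> \<delta>2"
    and result: "is_flow_on B (V A - {\<nu>, \<mu>} \<union> {\<kappa>, \<chi>1, \<chi>2}) (E A - {\<epsilon>} \<union> {\<delta>1, \<delta>2})
      ((lab A)(\<kappa> := Cocontraction, \<chi>1 := Cut, \<chi>2 := Cut))
      ((up A)(\<delta>1 := Vx \<kappa>, \<delta>2 := Vx \<kappa>))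
      ((lo A)(\<epsilon>3 := Vx \<kappa>, \<epsilon>1 := Vx \<chi>1, \<delta>1 := Vx \<chi>1, \<epsilon>2 := Vx \<chi>2, \<delta>2 := Vx \<chi>2))"
begin

lemma polarised_A: "polarised_flow A \<pi>"
  using ranked unfolding ranked_flow_def by blast

lemma edges_A: "\<epsilon> \<in> E A" "\<epsilon>1 \<in> E A" "\<epsilon>2 \<in> E A" "\<epsilon>3 \<in> E A"
  using redex(5) by auto

lemma incidence_A:
  "upper_edges A \<nu> = {\<epsilon>1, \<epsilon>2}" "lower_edges A \<nu> = {\<epsilon>}"
  "upper_edges A \<mu> = {\<epsilon>, \<epsilon>3}" "lower_edges A \<mu> = {}"
  by (rule polarised_flow_upper_edges_eq polarised_flow_lower_edges_eq, rule polarised_A, rule redex;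
      use edges_A redex in \<open>auto simp: upper_edges_def lower_edges_def\<close>)+

lemma signs_A: "\<pi> \<epsilon>1 = \<pi> \<epsilon>" "\<pi> \<epsilon>2 = \<pi> \<epsilon>" "\<pi> \<epsilon>3 = (\<not> \<pi> \<epsilon>)"
proof -
  have "locally_valid A \<pi> \<nu>" "locally_valid A \<pi> \<mu>"
    using polarised_flow_locally_valid[OF polarised_A] redex(1,2) by blast+
  then show "\<pi> \<epsilon>1 = \<pi> \<epsilon>" "\<pi> \<epsilon>2 = \<pi> \<epsilon>" "\<pi> \<epsilon>3 = (\<not> \<pi> \<epsilon>)"
    using locally_valid_same_sign[of A \<pi> \<nu>] locally_valid_opposite_sign[of A \<pi> \<mu> \<epsilon>3 \<epsilon>] redex(3,4,7)
    unfolding incident_edges_def incidence_A by auto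
qed

lemma distinct_A: "\<nu> \<noteq> \<mu>" "\<epsilon>1 \<noteq> \<epsilon>2" "\<epsilon>1 \<noteq> \<epsilon>" "\<epsilon>2 \<noteq> \<epsilon>" "\<epsilon>1 \<noteq> \<epsilon>3" "\<epsilon>2 \<noteq> \<epsilon>3" "\<epsilon> \<notin> {\<delta>1, \<delta>2}" "\<epsilon>1 \<notin> {\<delta>1, \<delta>2}"
  "\<epsilon>2 \<notin> {\<delta>1, \<delta>2}" "\<epsilon>3 \<notin> {\<delta>1, \<delta>2}"
  using redex(3,4,6,8,9,11,12) edges_A fresh(5,6) by auto

lemma V_B: "V B = V A - {\<nu>, \<mu>} \<union> {\<kappa>, \<chi>1, \<chi>2}"
  and E_B: "E B = E A - {\<epsilon>} \<union> {\<delta>1, \<delta>2}"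
  and lab_B: "v \<in> V B \<Longrightarrow> lab B v = ((lab A)(\<kappa> := Cocontraction, \<chi>1 := Cut, \<chi>2 := Cut)) v"
  and up_B: "e \<in> E B \<Longrightarrow> up B e = ((up A)(\<delta>1 := Vx \<kappa>, \<delta>2 := Vx \<kappa>)) e"
  and lo_B: "e \<in> E B \<Longrightarrow>
    lo B e = ((lo A)(\<epsilon>3 := Vx \<kappa>, \<epsilon>1 := Vx \<chi>1, \<delta>1 := Vx \<chi>1, \<epsilon>2 := Vx \<chi>2, \<delta>2 := Vx \<chi>2)) e"
  using is_flow_onD[OF result] by simp_all

definition origin :: "'v \<Rightarrow> 'v" where
  "origin = id(\<kappa> := \<mu>, \<chi>1 := \<nu>, \<chi>2 := \<nu>)"

definition polarity :: "'e \<Rightarrow> bool" where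
  "polarity = \<pi>(\<delta>1 := \<not> \<pi> \<epsilon>, \<delta>2 := \<not> \<pi> \<epsilon>)"

lemma origin_id: "v \<in> V A \<Longrightarrow> origin v = v"
  using fresh unfolding origin_def by auto

lemma old_edge_B:
  assumes "e \<in> E B" "e \<in> E A"
  shows "up B e = up A e" "lo A e = map_node origin (lo B e)"
proof -
  have "attached A e" using polarised_flow_attached[OF polarised_A assms(2)] .
  then show "up B e = up A e" "lo A e = map_node origin (lo B e)"
    using up_B[OF assms(1)] lo_B[OF assms(1)] map_node_attached(2)[of A e origin] origin_id
      fresh(5,6) assms(2) distinct_A redex(8,9,12) fresh(4)
    by (auto simp: origin_def)
qed

lemma flow_rewrite: "flow_rewrite A B origin"
proof
  fix e assume e: "e \<in> E B" "e \<in> E A"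
  have "attached A e" using polarised_flow_attached[OF polarised_A e(2)] .
  then show "up A e = map_node origin (up B e)"
    using old_edge_B(1)[OF e] map_node_attached(1) origin_id by metis
  show "lo A e = map_node origin (lo B e)" using old_edge_B(2)[OF e] .
next
  fix e assume "e \<in> E B" "e \<notin> E A"
  then have "e = \<delta>1 \<or> e = \<delta>2" using E_B by blast
  then show "\<exists>x. x \<notin> V A \<and> up B e = Vx x" "\<exists>x. x \<notin> V A \<and> lo B e = Vx x"
    using up_B lo_B \<open>e \<in> E B\<close> fresh distinct_A by auto
qed (use origin_id lab_B fresh in auto)


lemma endpoints_B:
  assumes e: "e \<in> E B" and x: "up B e = Vx x \<or> lo B e = Vx x"
  shows "x \<in> V B"
proof (cases "e \<in> {\<delta>1, \<delta>2}")
  case True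
  then show ?thesis
    using up_B[OF e] lo_B[OF e] x distinct_A fresh(7) unfolding V_B by auto
next
  case False
  then have old: "e \<in> E A" "e \<noteq> \<epsilon>" using e unfolding E_B by auto
  have vertex: "x \<in> V A - {\<nu>, \<mu>}"
    if "up A e = Vx x \<or> lo A e = Vx x \<and> e \<notin> {\<epsilon>1, \<epsilon>2, \<epsilon>3}"
  proof -
    have "e \<in> lower_edges A x \<or> e \<in> upper_edges A x \<and> e \<notin> {\<epsilon>1, \<epsilon>2, \<epsilon>3}"
      using that old(1) unfolding upper_edges_def lower_edges_def by blast
    then have "x \<noteq> \<nu>" "x \<noteq> \<mu>" using incidence_A old(2) by auto
    then show ?thesis using that polarised_flow_vertex[OF polarised_A old(1)] by blast
  qed
  have "up B e = up A e" using old_edge_B(1)[OF e old(1)] .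
  moreover have "lo B e = (if e = \<epsilon>3 then Vx \<kappa> else if e = \<epsilon>1 then Vx \<chi>1
      else if e = \<epsilon>2 then Vx \<chi>2 else lo A e)"
    using lo_B[OF e] False distinct_A by simp
  ultimately show ?thesis
    using x vertex unfolding V_B by (auto split: if_splits)
qed

lemma new_endpoints_B:
  assumes e: "e \<in> E B" and x: "x \<notin> V A"
  shows "up B e = Vx x \<Longrightarrow> e \<in> {\<delta>1, \<delta>2} \<and> x = \<kappa>"
    "lo B e = Vx x \<Longrightarrow> e = \<epsilon>3 \<and> x = \<kappa> \<or> e \<in> {\<epsilon>1, \<delta>1} \<and> x = \<chi>1 \<or> e \<in> {\<epsilon>2, \<delta>2} \<and> x = \<chi>2"
  using e x up_B[OF e] lo_B[OF e] polarised_flow_vertex[OF polarised_A, of e x] distinct_A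
  unfolding E_B by (auto split: if_splits)

lemma locally_valid_new:
  assumes v: "v \<in> V B" "v \<notin> V A"
  shows "locally_valid B polarity v"
proof -
  have signs: "polarity \<epsilon>1 = \<pi> \<epsilon>" "polarity \<epsilon>2 = \<pi> \<epsilon>" "polarity \<epsilon>3 = (\<not> \<pi> \<epsilon>)"
    "polarity \<delta>1 = (\<not> \<pi> \<epsilon>)" "polarity \<delta>2 = (\<not> \<pi> \<epsilon>)"
    using signs_A distinct_A unfolding polarity_def by auto
  have "v = \<kappa> \<or> v = \<chi>1 \<or> v = \<chi>2" using v unfolding V_B by blast
  then show ?thesis
  proof (elim disjE)
    assume "v = \<kappa>"
    then show ?thesis
      using new_endpoints_B[OF _ fresh(1)] signs fresh(4,7) lab_B[OF v(1)]
      by (intro locally_valid_intro[of B v "{\<epsilon>3}" "{\<delta>1, \<delta>2}"])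
        (auto simp: upper_edges_def lower_edges_def)
  next
    assume "v = \<chi>1"
    then show ?thesis
      using new_endpoints_B[OF _ fresh(2)] signs fresh(4) distinct_A lab_B[OF v(1)]
      by (intro locally_valid_intro[of B v "{\<epsilon>1, \<delta>1}" "{}"])
        (auto simp: upper_edges_def lower_edges_def)
  next
    assume "v = \<chi>2"
    then show ?thesis
      using new_endpoints_B[OF _ fresh(3)] signs fresh(4) distinct_A lab_B[OF v(1)]
      by (intro locally_valid_intro[of B v "{\<epsilon>2, \<delta>2}" "{}"])
        (auto simp: upper_edges_def lower_edges_def)
  qed
qed

text \<open>The new edges \<open>\<delta>i\<close> run from \<open>\<kappa>\<close> down to \<open>\<chi>i\<close> with the polarity opposite to that of
  \<open>\<epsilon>\<close>, so they are oriented like \<open>\<epsilon>\<close> between the vertices \<open>\<mu>\<close> and \<open>\<nu>\<close> they originate from.\<close>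
lemma new_arcs:
  assumes "e \<notin> E A" "arc B polarity e a b"
  shows "arc A \<pi> \<epsilon> (origin a) (origin b)"
proof -
  have "e \<in> E B" using assms(2) unfolding arc_def by blast
  then have "e = \<delta>1 \<or> e = \<delta>2" using assms(1) unfolding E_B by blast
  then show ?thesis
    using up_B[OF \<open>e \<in> E B\<close>] lo_B[OF \<open>e \<in> E B\<close>] redex(10,11) edges_A fresh(4,7) distinct_A
    by (intro arc_transfer_reversed[OF assms(2)]) (auto simp: polarity_def origin_def)
qed

lemma ranked_B: "ranked_flow B polarity (r \<circ> origin)"
proof (rule flow_rewrite.ranked_flow_rewrite[OF flow_rewrite ranked])
  show "finite (E B)" using polarised_flow_finite[OF polarised_A] unfolding E_B by simp
  show "\<And>e x. e \<in> E B \<Longrightarrow> up B e = Vx x \<or> lo B e = Vx x \<Longrightarrow> x \<in> V B"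
    by (rule endpoints_B)
  show "\<And>e. e \<in> E A \<Longrightarrow> polarity e = \<pi> e" using fresh(5,6) unfolding polarity_def by auto
qed (use locally_valid_new new_arcs in blast)+

end

lemma step_c1_ranked:
  assumes "step_c1 A B" "ranked_flow A \<pi> r"
  shows "\<exists>\<pi>' r'. ranked_flow B \<pi>' r'"
proof -
  obtain \<nu> \<mu> \<epsilon> \<epsilon>1 \<epsilon>2 \<epsilon>3 \<kappa> \<chi>1 \<chi>2 \<delta>1 \<delta>2
    where "c1_redex A B \<pi> r \<nu> \<mu> \<kappa> \<chi>1 \<chi>2 \<epsilon> \<epsilon>1 \<epsilon>2 \<epsilon>3 \<delta>1 \<delta>2"
    using assms unfolding step_c1_def
    \<comment> \<open>matching the result flow first fixes all witnesses at once\<close>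
    by (elim exE conjE) (rule that, rule c1_redex.intro[rotated -1], assumption+)
  then show ?thesis by (blast dest: c1_redex.ranked_B)
qed

locale c2_redex =
  fixes A B :: "('v,'e) flow" and \<pi> :: "'e \<Rightarrow> bool" and r :: "'v \<Rightarrow> nat"
    and \<iota> \<kappa> \<gamma> \<iota>1 \<iota>2 :: 'v and \<epsilon>1 \<epsilon>2 \<epsilon>3 \<epsilon>4 \<delta>1 \<delta>2 :: 'e
  assumes ranked: "ranked_flow A \<pi> r"
    and redex: "\<iota> \<in> V A" "\<kappa> \<in> V A" "lab A \<iota> = Interaction" "lab A \<kappa> = Cocontraction"
      "{\<epsilon>1, \<epsilon>2, \<epsilon>3, \<epsilon>4} \<subseteq> E A" "\<epsilon>1 \<noteq> \<epsilon>2" "\<epsilon>3 \<noteq> \<epsilon>4"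
      "up A \<epsilon>3 = Vx \<iota>" "up A \<epsilon>4 = Vx \<iota>" "lo A \<epsilon>4 = Vx \<kappa>" "up A \<epsilon>1 = Vx \<kappa>" "up A \<epsilon>2 = Vx \<kappa>"
    and fresh: "\<gamma> \<notin> V A" "\<iota>1 \<notin> V A" "\<iota>2 \<notin> V A" "distinct [\<gamma>, \<iota>1, \<iota>2]"
      "\<delta>1 \<notin> E A" "\<delta>2 \<notin> E A" "\<delta>1 \<noteq> \<delta>2"
    and result: "is_flow_on B (V A - {\<iota>, \<kappa>} \<union> {\<gamma>, \<iota>1, \<iota>2}) (E A - {\<epsilon>4} \<union> {\<delta>1, \<delta>2})
      ((lab A)(\<gamma> := Contraction, \<iota>1 := Interaction, \<iota>2 := Interaction))
      ((up A)(\<epsilon>3 := Vx \<gamma>, \<epsilon>1 := Vx \<iota>1, \<delta>1 := Vx \<iota>1, \<epsilon>2 := Vx \<iota>2, \<delta>2 := Vx \<iota>2))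
      ((lo A)(\<delta>1 := Vx \<gamma>, \<delta>2 := Vx \<gamma>))"
begin

lemma polarised_A: "polarised_flow A \<pi>"
  using ranked unfolding ranked_flow_def by blast

lemma edges_A: "\<epsilon>1 \<in> E A" "\<epsilon>2 \<in> E A" "\<epsilon>3 \<in> E A" "\<epsilon>4 \<in> E A"
  using redex(5) by auto

lemma incidence_A:
  "upper_edges A \<iota> = {}" "lower_edges A \<iota> = {\<epsilon>3, \<epsilon>4}"
  "upper_edges A \<kappa> = {\<epsilon>4}" "lower_edges A \<kappa> = {\<epsilon>1, \<epsilon>2}"
  by (rule polarised_flow_upper_edges_eq polarised_flow_lower_edges_eq, rule polarised_A, rule redex;
      use edges_A redex in \<open>auto simp: upper_edges_def lower_edges_def\<close>)+

lemma signs_A: "\<pi> \<epsilon>1 = \<pi> \<epsilon>4" "\<pi> \<epsilon>2 = \<pi> \<epsilon>4" "\<pi> \<epsilon>3 = (\<not> \<pi> \<epsilon>4)"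
proof -
  have "locally_valid A \<pi> \<iota>" "locally_valid A \<pi> \<kappa>"
    using polarised_flow_locally_valid[OF polarised_A] redex(1,2) by blast+
  then show "\<pi> \<epsilon>1 = \<pi> \<epsilon>4" "\<pi> \<epsilon>2 = \<pi> \<epsilon>4" "\<pi> \<epsilon>3 = (\<not> \<pi> \<epsilon>4)"
    using locally_valid_same_sign[of A \<pi> \<kappa>] locally_valid_opposite_sign[of A \<pi> \<iota> \<epsilon>3 \<epsilon>4] redex(3,4,7)
    unfolding incident_edges_def incidence_A by auto
qed

lemma distinct_A: "\<iota> \<noteq> \<kappa>" "\<epsilon>1 \<noteq> \<epsilon>2" "\<epsilon>1 \<noteq> \<epsilon>4" "\<epsilon>2 \<noteq> \<epsilon>4" "\<epsilon>1 \<noteq> \<epsilon>3" "\<epsilon>2 \<noteq> \<epsilon>3"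
  "\<epsilon>1 \<notin> {\<delta>1, \<delta>2}" "\<epsilon>2 \<notin> {\<delta>1, \<delta>2}" "\<epsilon>3 \<notin> {\<delta>1, \<delta>2}" "\<epsilon>4 \<notin> {\<delta>1, \<delta>2}"
  using redex(3,4,6,8,9,11,12) edges_A fresh(5,6) by auto

lemma V_B: "V B = V A - {\<iota>, \<kappa>} \<union> {\<gamma>, \<iota>1, \<iota>2}"
  and E_B: "E B = E A - {\<epsilon>4} \<union> {\<delta>1, \<delta>2}"
  and lab_B: "v \<in> V B \<Longrightarrow> lab B v = ((lab A)(\<gamma> := Contraction, \<iota>1 := Interaction, \<iota>2 := Interaction)) v"
  and up_B: "e \<in> E B \<Longrightarrow>
    up B e = ((up A)(\<epsilon>3 := Vx \<gamma>, \<epsilon>1 := Vx \<iota>1, \<delta>1 := Vx \<iota>1, \<epsilon>2 := Vx \<iota>2, \<delta>2 := Vx \<iota>2)) e"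
  and lo_B: "e \<in> E B \<Longrightarrow> lo B e = ((lo A)(\<delta>1 := Vx \<gamma>, \<delta>2 := Vx \<gamma>)) e"
  using is_flow_onD[OF result] by simp_all

definition origin :: "'v \<Rightarrow> 'v" where
  "origin = id(\<gamma> := \<iota>, \<iota>1 := \<kappa>, \<iota>2 := \<kappa>)"

definition polarity :: "'e \<Rightarrow> bool" where
  "polarity = \<pi>(\<delta>1 := \<not> \<pi> \<epsilon>4, \<delta>2 := \<not> \<pi> \<epsilon>4)"

lemma origin_id: "v \<in> V A \<Longrightarrow> origin v = v"
  using fresh unfolding origin_def by auto

lemma old_edge_B:
  assumes "e \<in> E B" "e \<in> E A"
  shows "lo B e = lo A e" "up A e = map_node origin (up B e)"
proof -
  have "attached A e" using polarised_flow_attached[OF polarised_A assms(2)] .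
  then show "lo B e = lo A e" "up A e = map_node origin (up B e)"
    using up_B[OF assms(1)] lo_B[OF assms(1)] map_node_attached(1)[of A e origin] origin_id
      fresh(5,6) assms(2) distinct_A redex(8,11,12) fresh(4)
    by (auto simp: origin_def)
qed

lemma flow_rewrite: "flow_rewrite A B origin"
proof
  fix e assume e: "e \<in> E B" "e \<in> E A"
  have "attached A e" using polarised_flow_attached[OF polarised_A e(2)] .
  then show "lo A e = map_node origin (lo B e)"
    using old_edge_B(1)[OF e] map_node_attached(2) origin_id by metis
  show "up A e = map_node origin (up B e)" using old_edge_B(2)[OF e] .
next
  fix e assume "e \<in> E B" "e \<notin> E A"
  then have "e = \<delta>1 \<or> e = \<delta>2" using E_B by blast
  then show "\<exists>x. x \<notin> V A \<and> up B e = Vx x" "\<exists>x. x \<notin> V A \<and> lo B e = Vx x"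
    using up_B lo_B \<open>e \<in> E B\<close> fresh distinct_A by auto
qed (use origin_id lab_B fresh in auto)

lemma endpoints_B:
  assumes e: "e \<in> E B" and x: "up B e = Vx x \<or> lo B e = Vx x"
  shows "x \<in> V B"
proof (cases "e \<in> {\<delta>1, \<delta>2}")
  case True
  then show ?thesis
    using up_B[OF e] lo_B[OF e] x distinct_A fresh(7) unfolding V_B by auto
next
  case False
  then have old: "e \<in> E A" "e \<noteq> \<epsilon>4" using e unfolding E_B by auto
  have vertex: "x \<in> V A - {\<iota>, \<kappa>}"
    if "lo A e = Vx x \<or> up A e = Vx x \<and> e \<notin> {\<epsilon>1, \<epsilon>2, \<epsilon>3}"
  proof -
    have "e \<in> upper_edges A x \<or> e \<in> lower_edges A x \<and> e \<notin> {\<epsilon>1, \<epsilon>2, \<epsilon>3}"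
      using that old(1) unfolding upper_edges_def lower_edges_def by blast
    then have "x \<noteq> \<iota>" "x \<noteq> \<kappa>" using incidence_A old(2) by auto
    then show ?thesis using that polarised_flow_vertex[OF polarised_A old(1)] by blast
  qed
  have "lo B e = lo A e" using old_edge_B(1)[OF e old(1)] .
  moreover have "up B e = (if e = \<epsilon>3 then Vx \<gamma> else if e = \<epsilon>1 then Vx \<iota>1
      else if e = \<epsilon>2 then Vx \<iota>2 else up A e)"
    using up_B[OF e] False distinct_A by simp
  ultimately show ?thesis
    using x vertex unfolding V_B by (auto split: if_splits)
qed

lemma new_endpoints_B:
  assumes e: "e \<in> E B" and x: "x \<notin> V A"
  shows "up B e = Vx x \<Longrightarrow> e = \<epsilon>3 \<and> x = \<gamma> \<or> e \<in> {\<epsilon>1, \<delta>1} \<and> x = \<iota>1 \<or> e \<in> {\<epsilon>2, \<delta>2} \<and> x = \<iota>2"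
    "lo B e = Vx x \<Longrightarrow> e \<in> {\<delta>1, \<delta>2} \<and> x = \<gamma>"
  using e x up_B[OF e] lo_B[OF e] polarised_flow_vertex[OF polarised_A, of e x] distinct_A
  unfolding E_B by (auto split: if_splits)

lemma locally_valid_new:
  assumes v: "v \<in> V B" "v \<notin> V A"
  shows "locally_valid B polarity v"
proof -
  have signs: "polarity \<epsilon>1 = \<pi> \<epsilon>4" "polarity \<epsilon>2 = \<pi> \<epsilon>4" "polarity \<epsilon>3 = (\<not> \<pi> \<epsilon>4)"
    "polarity \<delta>1 = (\<not> \<pi> \<epsilon>4)" "polarity \<delta>2 = (\<not> \<pi> \<epsilon>4)"
    using signs_A distinct_A unfolding polarity_def by auto
  have "v = \<gamma> \<or> v = \<iota>1 \<or> v = \<iota>2" using v unfolding V_B by blast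
  then show ?thesis
  proof (elim disjE)
    assume "v = \<gamma>"
    then show ?thesis
      using new_endpoints_B[OF _ fresh(1)] signs fresh(4,7) lab_B[OF v(1)]
      by (intro locally_valid_intro[of B v "{\<delta>1, \<delta>2}" "{\<epsilon>3}"])
        (auto simp: upper_edges_def lower_edges_def)
  next
    assume "v = \<iota>1"
    then show ?thesis
      using new_endpoints_B[OF _ fresh(2)] signs fresh(4) distinct_A lab_B[OF v(1)]
      by (intro locally_valid_intro[of B v "{}" "{\<epsilon>1, \<delta>1}"])
        (auto simp: upper_edges_def lower_edges_def)
  next
    assume "v = \<iota>2"
    then show ?thesis
      using new_endpoints_B[OF _ fresh(3)] signs fresh(4) distinct_A lab_B[OF v(1)]
      by (intro locally_valid_intro[of B v "{}" "{\<epsilon>2, \<delta>2}"])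
        (auto simp: upper_edges_def lower_edges_def)
  qed
qed

lemma new_arcs:
  assumes "e \<notin> E A" "arc B polarity e a b"
  shows "arc A \<pi> \<epsilon>4 (origin a) (origin b)"
proof -
  have "e \<in> E B" using assms(2) unfolding arc_def by blast
  then have "e = \<delta>1 \<or> e = \<delta>2" using assms(1) unfolding E_B by blast
  then show ?thesis
    using up_B[OF \<open>e \<in> E B\<close>] lo_B[OF \<open>e \<in> E B\<close>] redex(9,10) edges_A fresh(4,7) distinct_A
    by (intro arc_transfer_reversed[OF assms(2)]) (auto simp: polarity_def origin_def)
qed

lemma ranked_B: "ranked_flow B polarity (r \<circ> origin)"
proof (rule flow_rewrite.ranked_flow_rewrite[OF flow_rewrite ranked])
  show "finite (E B)" using polarised_flow_finite[OF polarised_A] unfolding E_B by simp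
  show "\<And>e x. e \<in> E B \<Longrightarrow> up B e = Vx x \<or> lo B e = Vx x \<Longrightarrow> x \<in> V B"
    by (rule endpoints_B)
  show "\<And>e. e \<in> E A \<Longrightarrow> polarity e = \<pi> e" using fresh(5,6) unfolding polarity_def by auto
qed (use locally_valid_new new_arcs in blast)+

end

lemma step_c2_ranked:
  assumes "step_c2 A B" "ranked_flow A \<pi> r"
  shows "\<exists>\<pi>' r'. ranked_flow B \<pi>' r'"
proof -
  obtain \<iota> \<kappa> \<epsilon>1 \<epsilon>2 \<epsilon>3 \<epsilon>4 \<gamma> \<iota>1 \<iota>2 \<delta>1 \<delta>2
    where "c2_redex A B \<pi> r \<iota> \<kappa> \<gamma> \<iota>1 \<iota>2 \<epsilon>1 \<epsilon>2 \<epsilon>3 \<epsilon>4 \<delta>1 \<delta>2"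
    using assms unfolding step_c2_def
    by (elim exE conjE) (rule that, rule c2_redex.intro[rotated -1], assumption+)
  then show ?thesis by (blast dest: c2_redex.ranked_B)
qed


locale c3_redex =
  fixes A B :: "('v,'e) flow" and \<pi> :: "'e \<Rightarrow> bool" and r :: "'v \<Rightarrow> nat"
    and \<gamma> \<kappa> \<kappa>1 \<kappa>2 \<gamma>3 \<gamma>4 :: 'v and \<epsilon> \<epsilon>1 \<epsilon>2 \<epsilon>3 \<epsilon>4 d13 d14 d23 d24 :: 'e
  assumes ranked: "ranked_flow A \<pi> r"
    and redex: "\<gamma> \<in> V A" "\<kappa> \<in> V A" "lab A \<gamma> = Contraction" "lab A \<kappa> = Cocontraction"
      "{\<epsilon>, \<epsilon>1, \<epsilon>2, \<epsilon>3, \<epsilon>4} \<subseteq> E A" "\<epsilon>1 \<noteq> \<epsilon>2" "\<epsilon>3 \<noteq> \<epsilon>4"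
      "lo A \<epsilon>1 = Vx \<gamma>" "lo A \<epsilon>2 = Vx \<gamma>" "up A \<epsilon> = Vx \<gamma>" "lo A \<epsilon> = Vx \<kappa>"
      "up A \<epsilon>3 = Vx \<kappa>" "up A \<epsilon>4 = Vx \<kappa>"
    and fresh: "\<kappa>1 \<notin> V A" "\<kappa>2 \<notin> V A" "\<gamma>3 \<notin> V A" "\<gamma>4 \<notin> V A" "distinct [\<kappa>1, \<kappa>2, \<gamma>3, \<gamma>4]"
      "d13 \<notin> E A" "d14 \<notin> E A" "d23 \<notin> E A" "d24 \<notin> E A" "distinct [d13, d14, d23, d24]"
    and result: "is_flow_on B (V A - {\<gamma>, \<kappa>} \<union> {\<kappa>1, \<kappa>2, \<gamma>3, \<gamma>4}) (E A - {\<epsilon>} \<union> {d13, d14, d23, d24})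
      ((lab A)(\<kappa>1 := Cocontraction, \<kappa>2 := Cocontraction, \<gamma>3 := Contraction, \<gamma>4 := Contraction))
      ((up A)(\<epsilon>3 := Vx \<gamma>3, \<epsilon>4 := Vx \<gamma>4, d13 := Vx \<kappa>1, d14 := Vx \<kappa>1, d23 := Vx \<kappa>2, d24 := Vx \<kappa>2))
      ((lo A)(\<epsilon>1 := Vx \<kappa>1, \<epsilon>2 := Vx \<kappa>2, d13 := Vx \<gamma>3, d14 := Vx \<gamma>4, d23 := Vx \<gamma>3, d24 := Vx \<gamma>4))"
begin

lemma polarised_A: "polarised_flow A \<pi>"
  using ranked unfolding ranked_flow_def by blast

lemma edges_A: "\<epsilon> \<in> E A" "\<epsilon>1 \<in> E A" "\<epsilon>2 \<in> E A" "\<epsilon>3 \<in> E A" "\<epsilon>4 \<in> E A"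
  using redex(5) by auto

lemma incidence_A:
  "upper_edges A \<gamma> = {\<epsilon>1, \<epsilon>2}" "lower_edges A \<gamma> = {\<epsilon>}"
  "upper_edges A \<kappa> = {\<epsilon>}" "lower_edges A \<kappa> = {\<epsilon>3, \<epsilon>4}"
  by (rule polarised_flow_upper_edges_eq polarised_flow_lower_edges_eq, rule polarised_A, rule redex;
      use edges_A redex in \<open>auto simp: upper_edges_def lower_edges_def\<close>)+

lemma signs_A: "\<pi> \<epsilon>1 = \<pi> \<epsilon>" "\<pi> \<epsilon>2 = \<pi> \<epsilon>" "\<pi> \<epsilon>3 = \<pi> \<epsilon>" "\<pi> \<epsilon>4 = \<pi> \<epsilon>"
proof -
  have "locally_valid A \<pi> \<gamma>" "locally_valid A \<pi> \<kappa>"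
    using polarised_flow_locally_valid[OF polarised_A] redex(1,2) by blast+
  then show "\<pi> \<epsilon>1 = \<pi> \<epsilon>" "\<pi> \<epsilon>2 = \<pi> \<epsilon>" "\<pi> \<epsilon>3 = \<pi> \<epsilon>" "\<pi> \<epsilon>4 = \<pi> \<epsilon>"
    using locally_valid_same_sign[of A \<pi> \<gamma>] locally_valid_same_sign[of A \<pi> \<kappa>] redex(3,4)
    unfolding incident_edges_def incidence_A by auto
qed

text \<open>Together with \<open>\<epsilon>\<close> such an edge would form an oriented cycle, which the ranking excludes.\<close>
lemma no_edge_back:
  assumes "e \<in> E A" "up A e = Vx \<kappa>" "lo A e = Vx \<gamma>" "\<pi> e = \<pi> \<epsilon>"
  shows False
proof -
  have "arc A \<pi> \<epsilon> \<gamma> \<kappa> \<and> arc A \<pi> e \<kappa> \<gamma> \<or> arc A \<pi> \<epsilon> \<kappa> \<gamma> \<and> arc A \<pi> e \<gamma> \<kappa>"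
    using assms edges_A redex(10,11) unfolding arc_def by auto
  then show False using ranked unfolding ranked_flow_def by (meson less_asym)
qed

lemma distinct_A: "\<gamma> \<noteq> \<kappa>" "\<epsilon>1 \<noteq> \<epsilon>2" "\<epsilon>3 \<noteq> \<epsilon>4" "\<epsilon> \<notin> {\<epsilon>1, \<epsilon>2, \<epsilon>3, \<epsilon>4}"
  "\<epsilon>1 \<notin> {\<epsilon>3, \<epsilon>4}" "\<epsilon>2 \<notin> {\<epsilon>3, \<epsilon>4}"
  "{d13, d14, d23, d24} \<inter> {\<epsilon>, \<epsilon>1, \<epsilon>2, \<epsilon>3, \<epsilon>4} = {}"
  "d13 \<noteq> d14" "d13 \<noteq> d23" "d13 \<noteq> d24" "d14 \<noteq> d23" "d14 \<noteq> d24" "d23 \<noteq> d24"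
  using redex(3,4,6-13) edges_A fresh(6-10) signs_A no_edge_back by auto

lemma V_B: "V B = V A - {\<gamma>, \<kappa>} \<union> {\<kappa>1, \<kappa>2, \<gamma>3, \<gamma>4}"
  and E_B: "E B = E A - {\<epsilon>} \<union> {d13, d14, d23, d24}"
  and lab_B: "v \<in> V B \<Longrightarrow> lab B v =
    ((lab A)(\<kappa>1 := Cocontraction, \<kappa>2 := Cocontraction, \<gamma>3 := Contraction, \<gamma>4 := Contraction)) v"
  and up_B: "e \<in> E B \<Longrightarrow> up B e =
    ((up A)(\<epsilon>3 := Vx \<gamma>3, \<epsilon>4 := Vx \<gamma>4, d13 := Vx \<kappa>1, d14 := Vx \<kappa>1, d23 := Vx \<kappa>2, d24 := Vx \<kappa>2)) e"
  and lo_B: "e \<in> E B \<Longrightarrow> lo B e =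
    ((lo A)(\<epsilon>1 := Vx \<kappa>1, \<epsilon>2 := Vx \<kappa>2, d13 := Vx \<gamma>3, d14 := Vx \<gamma>4, d23 := Vx \<gamma>3, d24 := Vx \<gamma>4)) e"
  using is_flow_onD[OF result] by simp_all

definition origin :: "'v \<Rightarrow> 'v" where
  "origin = id(\<kappa>1 := \<gamma>, \<kappa>2 := \<gamma>, \<gamma>3 := \<kappa>, \<gamma>4 := \<kappa>)"

definition polarity :: "'e \<Rightarrow> bool" where
  "polarity = \<pi>(d13 := \<pi> \<epsilon>, d14 := \<pi> \<epsilon>, d23 := \<pi> \<epsilon>, d24 := \<pi> \<epsilon>)"

lemma origin_id: "v \<in> V A \<Longrightarrow> origin v = v"
  using fresh unfolding origin_def by auto

lemma old_edge_B:
  assumes "e \<in> E B" "e \<in> E A"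
  shows "up A e = map_node origin (up B e)" "lo A e = map_node origin (lo B e)"
proof -
  have "attached A e" using polarised_flow_attached[OF polarised_A assms(2)] .
  then show "up A e = map_node origin (up B e)" "lo A e = map_node origin (lo B e)"
    using up_B[OF assms(1)] lo_B[OF assms(1)] map_node_attached[of A e origin] origin_id
      assms(2) distinct_A redex(8,9,12,13) fresh(5-9)
    by (auto simp: origin_def)
qed

lemma flow_rewrite: "flow_rewrite A B origin"
proof
  fix e assume "e \<in> E B" "e \<notin> E A"
  then have "e \<in> {d13, d14, d23, d24}" using E_B by blast
  then show "\<exists>x. x \<notin> V A \<and> up B e = Vx x" "\<exists>x. x \<notin> V A \<and> lo B e = Vx x"
    using up_B lo_B \<open>e \<in> E B\<close> fresh distinct_A by auto
qed (use old_edge_B origin_id lab_B fresh in auto)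

lemma endpoints_B:
  assumes e: "e \<in> E B" and x: "up B e = Vx x \<or> lo B e = Vx x"
  shows "x \<in> V B"
proof (cases "e \<in> {d13, d14, d23, d24}")
  case True
  then show ?thesis
    using up_B[OF e] lo_B[OF e] x distinct_A unfolding V_B by auto
next
  case False
  then have old: "e \<in> E A" "e \<noteq> \<epsilon>" using e unfolding E_B by auto
  have vertex: "x \<in> V A - {\<gamma>, \<kappa>}"
    if "up A e = Vx x \<and> e \<notin> {\<epsilon>3, \<epsilon>4} \<or> lo A e = Vx x \<and> e \<notin> {\<epsilon>1, \<epsilon>2}"
  proof -
    have "e \<in> lower_edges A x \<and> e \<notin> {\<epsilon>3, \<epsilon>4} \<or> e \<in> upper_edges A x \<and> e \<notin> {\<epsilon>1, \<epsilon>2}"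
      using that old(1) unfolding upper_edges_def lower_edges_def by blast
    then have "x \<noteq> \<gamma>" "x \<noteq> \<kappa>" using incidence_A old(2) by auto
    then show ?thesis using that polarised_flow_vertex[OF polarised_A old(1)] by blast
  qed
  have "up B e = (if e = \<epsilon>3 then Vx \<gamma>3 else if e = \<epsilon>4 then Vx \<gamma>4 else up A e)"
    using up_B[OF e] False distinct_A by simp
  moreover have "lo B e = (if e = \<epsilon>1 then Vx \<kappa>1 else if e = \<epsilon>2 then Vx \<kappa>2 else lo A e)"
    using lo_B[OF e] False distinct_A by simp
  ultimately show ?thesis
    using x vertex unfolding V_B by (auto split: if_splits)
qed

lemma new_endpoints_B:
  assumes e: "e \<in> E B" and x: "x \<notin> V A"
  shows "up B e = Vx x \<Longrightarrow>
      e = \<epsilon>3 \<and> x = \<gamma>3 \<or> e = \<epsilon>4 \<and> x = \<gamma>4 \<or> e \<in> {d13, d14} \<and> x = \<kappa>1 \<or> e \<in> {d23, d24} \<and> x = \<kappa>2"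
    "lo B e = Vx x \<Longrightarrow>
      e = \<epsilon>1 \<and> x = \<kappa>1 \<or> e = \<epsilon>2 \<and> x = \<kappa>2 \<or> e \<in> {d13, d23} \<and> x = \<gamma>3 \<or> e \<in> {d14, d24} \<and> x = \<gamma>4"
  using e x up_B[OF e] lo_B[OF e] polarised_flow_vertex[OF polarised_A, of e x] distinct_A
  unfolding E_B by (auto split: if_splits)

lemma locally_valid_new:
  assumes v: "v \<in> V B" "v \<notin> V A"
  shows "locally_valid B polarity v"
proof -
  have signs: "\<forall>e \<in> {\<epsilon>1, \<epsilon>2, \<epsilon>3, \<epsilon>4, d13, d14, d23, d24}. polarity e = \<pi> \<epsilon>"
    using signs_A distinct_A unfolding polarity_def by auto
  have "v \<in> {\<kappa>1, \<kappa>2, \<gamma>3, \<gamma>4}" using v unfolding V_B by blast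
  then show ?thesis
  proof (elim insertE emptyE)
    assume "v = \<kappa>1"
    then show ?thesis
      using new_endpoints_B[OF _ fresh(1)] signs fresh(5) lab_B[OF v(1)]
      by (intro locally_valid_intro[of B v "{\<epsilon>1}" "{d13, d14}"])
        (auto simp: upper_edges_def lower_edges_def card_insert_if)
  next
    assume "v = \<kappa>2"
    then show ?thesis
      using new_endpoints_B[OF _ fresh(2)] signs fresh(5) lab_B[OF v(1)]
      by (intro locally_valid_intro[of B v "{\<epsilon>2}" "{d23, d24}"])
        (auto simp: upper_edges_def lower_edges_def card_insert_if)
  next
    assume "v = \<gamma>3"
    then show ?thesis
      using new_endpoints_B[OF _ fresh(3)] signs fresh(5) lab_B[OF v(1)]
      by (intro locally_valid_intro[of B v "{d13, d23}" "{\<epsilon>3}"])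
        (auto simp: upper_edges_def lower_edges_def card_insert_if)
  next
    assume "v = \<gamma>4"
    then show ?thesis
      using new_endpoints_B[OF _ fresh(4)] signs fresh(5) lab_B[OF v(1)]
      by (intro locally_valid_intro[of B v "{d14, d24}" "{\<epsilon>4}"])
        (auto simp: upper_edges_def lower_edges_def card_insert_if)
  qed
qed

lemma new_arcs:
  assumes "e \<notin> E A" "arc B polarity e a b"
  shows "arc A \<pi> \<epsilon> (origin a) (origin b)"
proof -
  have "e \<in> E B" using assms(2) unfolding arc_def by blast
  then have "e \<in> {d13, d14, d23, d24}" using assms(1) unfolding E_B by blast
  then show ?thesis
    using up_B[OF \<open>e \<in> E B\<close>] lo_B[OF \<open>e \<in> E B\<close>] redex(10,11) edges_A fresh(5) distinct_A
    by (intro arc_transfer[OF assms(2)]) (auto simp: polarity_def origin_def)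
qed

lemma ranked_B: "ranked_flow B polarity (r \<circ> origin)"
proof (rule flow_rewrite.ranked_flow_rewrite[OF flow_rewrite ranked])
  show "finite (E B)" using polarised_flow_finite[OF polarised_A] unfolding E_B by simp
  show "\<And>e x. e \<in> E B \<Longrightarrow> up B e = Vx x \<or> lo B e = Vx x \<Longrightarrow> x \<in> V B"
    by (rule endpoints_B)
  show "\<And>e. e \<in> E A \<Longrightarrow> polarity e = \<pi> e" using fresh(6-9) unfolding polarity_def by auto
qed (use locally_valid_new new_arcs in blast)+

end

lemma step_c3_ranked:
  assumes "step_c3 A B" "ranked_flow A \<pi> r"
  shows "\<exists>\<pi>' r'. ranked_flow B \<pi>' r'"
proof -
  obtain \<gamma> \<kappa> \<epsilon> \<epsilon>1 \<epsilon>2 \<epsilon>3 \<epsilon>4 \<kappa>1 \<kappa>2 \<gamma>3 \<gamma>4 d13 d14 d23 d24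
    where "c3_redex A B \<pi> r \<gamma> \<kappa> \<kappa>1 \<kappa>2 \<gamma>3 \<gamma>4 \<epsilon> \<epsilon>1 \<epsilon>2 \<epsilon>3 \<epsilon>4 d13 d14 d23 d24"
    using assms unfolding step_c3_def
    by (elim exE conjE) (rule that, rule c3_redex.intro[rotated -1], assumption+)
  then show ?thesis by (blast dest: c3_redex.ranked_B)
qed

lemma step_c_ranked:
  assumes "step_c A B" "ranked_flow A \<pi> r"
  shows "\<exists>\<pi>' r'. ranked_flow B \<pi>' r'"
  using assms step_c1_ranked step_c2_ranked step_c3_ranked unfolding step_c_def by blast

lemma steps_c_ranked:
  assumes "step_c\<^sup>*\<^sup>* A B" "\<exists>\<pi> r. ranked_flow A \<pi> r"
  shows "\<exists>\<pi> r. ranked_flow B \<pi> r"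
  using assms by (induction rule: rtranclp_induct) (use step_c_ranked in blast)+

theorem proposition4p17:
  fixes A B :: "(nat, nat) flow"
  assumes "atomic_flow A"
    and "cycle_free A"
    and "step_c\<^sup>*\<^sup>* A B"
  shows "cycle_free B"
proof -
  obtain \<pi> r where "ranked_flow B \<pi> r"
    using steps_c_ranked[OF assms(3) atomic_flow_ranked[OF assms(1,2)]] by blast
  then show ?thesis by (rule ranked_flow_cycle_free)
qed

end
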